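(* Let $f:A\to B$ be a ring homomorphism, $\mathfrak b$ an ideal of $B$, and $A\bowtie^f\mathfrak b:=\{(a,f(a)+b): a\in A,\ b\in\mathfrak b\}\subseteq A\times B$. (1) If $A\bowtie^f\mathfrak b$ is a coherent ring, then $A$ is a coherent ring. (2) If $A$ is a coherent ring and $\mathfrak b$ is a coherent $A$-module (with the structure induced by $f$, $a\cdot x=f(a)x$), then $A\bowtie^f\mathfrak b$ is a coherent ring.
   Context: All rings are commutative with identity. A module $M$ over a ring $R$ is coherent if it is finitely generated and every finitely generated submodule of $M$ is finitely presented; a ring $R$ is coherent if it is coherent as a module over itself (every finitely generated ideal is finitely presented). *)

theory Defs
  imports "HOL-Algebra.Algebra"
begin

definition lin_comb :: "('a, 'm) module \<Rightarrow> nat \<Rightarrow> (nat \<Rightarrow> 'a) \<Rightarrow> (nat \<Rightarrow> 'm) \<Rightarrow> 'm" where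
  "lin_comb M n c g = finsum M (\<lambda>i. c i \<odot>\<^bsub>M\<^esub> g i) {..<n}"

definition span_gens :: "('a, 'n) ring_scheme \<Rightarrow> ('a, 'm) module \<Rightarrow> nat \<Rightarrow> (nat \<Rightarrow> 'm) \<Rightarrow> 'm set" where
  "span_gens R M n g = {lin_comb M n c g | c. c \<in> {..<n} \<rightarrow> carrier R}"

definition fin_gen :: "('a, 'n) ring_scheme \<Rightarrow> ('a, 'm) module \<Rightarrow> 'm set \<Rightarrow> bool" where
  "fin_gen R M N \<longleftrightarrow> (\<exists>n g. g \<in> {..<n} \<rightarrow> N \<and> N = span_gens R M n g)"

definition free_module :: "('a, 'n) ring_scheme \<Rightarrow> nat \<Rightarrow> ('a, nat \<Rightarrow> 'a) module" where
  "free_module R n =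
     \<lparr>carrier = {..<n} \<rightarrow>\<^sub>E carrier R,
      monoid.mult = (\<lambda>c d. \<lambda>i\<in>{..<n}. c i \<otimes>\<^bsub>R\<^esub> d i),
      monoid.one = (\<lambda>i\<in>{..<n}. \<one>\<^bsub>R\<^esub>),
      ring.zero = (\<lambda>i\<in>{..<n}. \<zero>\<^bsub>R\<^esub>),
      ring.add = (\<lambda>c d. \<lambda>i\<in>{..<n}. c i \<oplus>\<^bsub>R\<^esub> d i),
      module.smult = (\<lambda>r c. \<lambda>i\<in>{..<n}. r \<otimes>\<^bsub>R\<^esub> c i)\<rparr>"

definition relations :: "('a, 'n) ring_scheme \<Rightarrow> ('a, 'm) module \<Rightarrow> nat \<Rightarrow> (nat \<Rightarrow> 'm) \<Rightarrow> (nat \<Rightarrow> 'a) set" where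
  "relations R M n g = {c \<in> {..<n} \<rightarrow>\<^sub>E carrier R. lin_comb M n c g = \<zero>\<^bsub>M\<^esub>}"

definition fin_pres :: "('a, 'n) ring_scheme \<Rightarrow> ('a, 'm) module \<Rightarrow> bool" where
  "fin_pres R M \<longleftrightarrow> (\<exists>n g. g \<in> {..<n} \<rightarrow> carrier M \<and> carrier M = span_gens R M n g \<and>
                        fin_gen R (free_module R n) (relations R M n g))"

definition coherent_module :: "('a, 'n) ring_scheme \<Rightarrow> ('a, 'm) module \<Rightarrow> bool" where
  "coherent_module R M \<longleftrightarrow> fin_gen R M (carrier M) \<and>
     (\<forall>N. N \<subseteq> carrier M \<and> fin_gen R M N \<longrightarrow> fin_pres R (M\<lparr>carrier := N\<rparr>))"

definition ring_module :: "('a, 'n) ring_scheme \<Rightarrow> ('a, 'a) module" where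
  "ring_module R = \<lparr>carrier = carrier R, monoid.mult = monoid.mult R, monoid.one = monoid.one R, ring.zero = ring.zero R,
                    ring.add = ring.add R, module.smult = monoid.mult R\<rparr>"

definition coherent_ring :: "('a, 'n) ring_scheme \<Rightarrow> bool" where
  "coherent_ring R \<longleftrightarrow> coherent_module R (ring_module R)"

definition ideal_module_via ::
  "('a, 'n) ring_scheme \<Rightarrow> ('b, 'm) ring_scheme \<Rightarrow> ('a \<Rightarrow> 'b) \<Rightarrow> 'b set \<Rightarrow> ('a, 'b) module" where
  "ideal_module_via A B f b = \<lparr>carrier = b, monoid.mult = monoid.mult B, monoid.one = monoid.one B, ring.zero = ring.zero B,
                               ring.add = ring.add B, module.smult = (\<lambda>a x. f a \<otimes>\<^bsub>B\<^esub> x)\<rparr>"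

definition amalg_carrier ::
  "('a, 'n) ring_scheme \<Rightarrow> ('b, 'm) ring_scheme \<Rightarrow> ('a \<Rightarrow> 'b) \<Rightarrow> 'b set \<Rightarrow> ('a \<times> 'b) set" where
  "amalg_carrier A B f b = {(a, f a \<oplus>\<^bsub>B\<^esub> y) | a y. a \<in> carrier A \<and> y \<in> b}"

definition amalg ::
  "('a, 'n) ring_scheme \<Rightarrow> ('b, 'm) ring_scheme \<Rightarrow> ('a \<Rightarrow> 'b) \<Rightarrow> 'b set \<Rightarrow> ('a \<times> 'b) ring" where
  "amalg A B f b = (RDirProd A B)\<lparr>carrier := amalg_carrier A B f b\<rparr>"

end

theory Submission
  imports Defs
begin

(*
  A is a retract of A \<bowtie>\<^sup>f b through a \<mapsto> (a, f a) and fst, and coherence passes to retracts: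
  the relations among finitely many elements of A are the fst-images of the relations among their
  images in A \<bowtie>\<^sup>f b.

  Conversely, A \<bowtie>\<^sup>f b is a finite A-module, generated by 1 and 0 \<times> b. A finitely generated
  ideal J of A \<bowtie>\<^sup>f b is therefore finitely generated over A, and as an A-module it is an extension
  of the finitely generated ideal fst ` J of A by the kernel of fst, which snd maps isomorphically
  onto a finitely generated submodule of b. Coherence of A and of b makes both ends finitely
  presented, hence J is finitely presented over A, and finite presentation descends along the
  finite ring extension A \<rightarrow> A \<bowtie>\<^sup>f b.
*)

lemma choice_lessThan:
  assumes "\<And>i. i < n \<Longrightarrow> \<exists>x. P i x"
  obtains p where "\<And>i. i < n \<Longrightarrow> P i (p i)"
  using bchoice[of "{..<n}" P] assms by auto

section \<open>Linear combinations and finite generation\<close>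

(* lin_comb and span_gens expect a module record without extension fields. *)
locale plain_module = module R M for R :: "('a,'n) ring_scheme" and M :: "('a,'b) module"

context plain_module
begin

lemma lin_comb_0 [simp]: "lin_comb M 0 c g = \<zero>\<^bsub>M\<^esub>"
  by (simp add: lin_comb_def)

lemma lin_comb_closed [intro]:
  "c \<in> {..<n} \<rightarrow> carrier R \<Longrightarrow> g \<in> {..<n} \<rightarrow> carrier M \<Longrightarrow> lin_comb M n c g \<in> carrier M"
  unfolding lin_comb_def by (rule M.finsum_closed) auto

lemma lin_comb_Suc:
  assumes "c \<in> {..<Suc n} \<rightarrow> carrier R" "g \<in> {..<Suc n} \<rightarrow> carrier M"
  shows "lin_comb M (Suc n) c g = lin_comb M n c g \<oplus>\<^bsub>M\<^esub> c n \<odot>\<^bsub>M\<^esub> g n"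
proof -
  have "lin_comb M (Suc n) c g = c n \<odot>\<^bsub>M\<^esub> g n \<oplus>\<^bsub>M\<^esub> lin_comb M n c g"
    unfolding lin_comb_def lessThan_Suc using assms
    by (subst M.finsum_insert) (auto simp: Pi_iff)
  also have "\<dots> = lin_comb M n c g \<oplus>\<^bsub>M\<^esub> c n \<odot>\<^bsub>M\<^esub> g n"
    using assms by (intro M.a_comm) (auto intro!: lin_comb_closed simp: Pi_iff)
  finally show ?thesis .
qed

lemma lin_comb_cong:
  assumes "\<And>i. i < n \<Longrightarrow> c i = c' i" "\<And>i. i < n \<Longrightarrow> g i = g' i"
    "c \<in> {..<n} \<rightarrow> carrier R" "g \<in> {..<n} \<rightarrow> carrier M"
  shows "lin_comb M n c g = lin_comb M n c' g'"
  unfolding lin_comb_def using assms by (intro M.finsum_cong') (auto simp: Pi_iff)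

lemma lin_comb_restrict_coeffs:
  assumes "c \<in> {..<n} \<rightarrow> carrier R" "g \<in> {..<n} \<rightarrow> carrier M"
  shows "lin_comb M n (restrict c {..<n}) g = lin_comb M n c g"
  using assms by (intro lin_comb_cong) auto

lemma lin_comb_add_coeffs:
  assumes "c \<in> {..<n} \<rightarrow> carrier R" "d \<in> {..<n} \<rightarrow> carrier R" "g \<in> {..<n} \<rightarrow> carrier M"
  shows "lin_comb M n (\<lambda>i. c i \<oplus>\<^bsub>R\<^esub> d i) g = lin_comb M n c g \<oplus>\<^bsub>M\<^esub> lin_comb M n d g"
proof -
  have "lin_comb M n (\<lambda>i. c i \<oplus>\<^bsub>R\<^esub> d i) g
      = finsum M (\<lambda>i. c i \<odot>\<^bsub>M\<^esub> g i \<oplus>\<^bsub>M\<^esub> d i \<odot>\<^bsub>M\<^esub> g i) {..<n}"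
    unfolding lin_comb_def using assms by (intro M.finsum_cong') (auto simp: Pi_iff smult_l_distr)
  also have "\<dots> = lin_comb M n c g \<oplus>\<^bsub>M\<^esub> lin_comb M n d g"
    unfolding lin_comb_def using assms by (intro M.finsum_addf) (auto simp: Pi_iff)
  finally show ?thesis .
qed

lemma lin_comb_add_gens:
  assumes "c \<in> {..<n} \<rightarrow> carrier R" "g \<in> {..<n} \<rightarrow> carrier M" "h \<in> {..<n} \<rightarrow> carrier M"
  shows "lin_comb M n c (\<lambda>i. g i \<oplus>\<^bsub>M\<^esub> h i) = lin_comb M n c g \<oplus>\<^bsub>M\<^esub> lin_comb M n c h"
proof -
  have "lin_comb M n c (\<lambda>i. g i \<oplus>\<^bsub>M\<^esub> h i)
      = finsum M (\<lambda>i. c i \<odot>\<^bsub>M\<^esub> g i \<oplus>\<^bsub>M\<^esub> c i \<odot>\<^bsub>M\<^esub> h i) {..<n}"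
    unfolding lin_comb_def using assms by (intro M.finsum_cong') (auto simp: Pi_iff smult_r_distr)
  also have "\<dots> = lin_comb M n c g \<oplus>\<^bsub>M\<^esub> lin_comb M n c h"
    unfolding lin_comb_def using assms by (intro M.finsum_addf) (auto simp: Pi_iff)
  finally show ?thesis .
qed

lemma lin_comb_smult:
  assumes "a \<in> carrier R" "c \<in> {..<n} \<rightarrow> carrier R" "g \<in> {..<n} \<rightarrow> carrier M"
  shows "lin_comb M n (\<lambda>i. a \<otimes>\<^bsub>R\<^esub> c i) g = a \<odot>\<^bsub>M\<^esub> lin_comb M n c g"
proof -
  have "lin_comb M n (\<lambda>i. a \<otimes>\<^bsub>R\<^esub> c i) g = finsum M (\<lambda>i. a \<odot>\<^bsub>M\<^esub> (c i \<odot>\<^bsub>M\<^esub> g i)) {..<n}"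
    unfolding lin_comb_def using assms by (intro M.finsum_cong') (auto simp: Pi_iff smult_assoc1)
  also have "\<dots> = a \<odot>\<^bsub>M\<^esub> lin_comb M n c g"
    unfolding lin_comb_def using assms by (intro finsum_smult_ldistr[symmetric]) auto
  finally show ?thesis .
qed

lemma lin_comb_append:
  assumes "c \<in> {..<n+m} \<rightarrow> carrier R" "g \<in> {..<n+m} \<rightarrow> carrier M"
  shows "lin_comb M (n+m) c g
       = lin_comb M n c g \<oplus>\<^bsub>M\<^esub> lin_comb M m (\<lambda>i. c (n+i)) (\<lambda>i. g (n+i))"
  using assms
proof (induction m)
  case 0
  then show ?case by (simp add: lin_comb_closed)
next
  case (Suc m)
  have c: "c \<in> {..<n+m} \<rightarrow> carrier R" and g: "g \<in> {..<n+m} \<rightarrow> carrier M"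
    using Suc.prems by auto
  have shifted: "(\<lambda>i. c (n+i)) \<in> {..<Suc m} \<rightarrow> carrier R" "(\<lambda>i. g (n+i)) \<in> {..<Suc m} \<rightarrow> carrier M"
    using Suc.prems by auto
  have "lin_comb M (n + Suc m) c g = lin_comb M (n+m) c g \<oplus>\<^bsub>M\<^esub> c (n+m) \<odot>\<^bsub>M\<^esub> g (n+m)"
    using Suc.prems by (simp add: lin_comb_Suc)
  also have "\<dots> = lin_comb M n c g \<oplus>\<^bsub>M\<^esub>
      (lin_comb M m (\<lambda>i. c (n+i)) (\<lambda>i. g (n+i)) \<oplus>\<^bsub>M\<^esub> c (n+m) \<odot>\<^bsub>M\<^esub> g (n+m))"
    using Suc.IH[OF c g] Suc.prems shifted c g
    by (simp only:) (intro M.a_assoc lin_comb_closed; auto simp: Pi_iff)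
  also have "\<dots> = lin_comb M n c g \<oplus>\<^bsub>M\<^esub> lin_comb M (Suc m) (\<lambda>i. c (n+i)) (\<lambda>i. g (n+i))"
    using shifted by (simp add: lin_comb_Suc)
  finally show ?case .
qed

lemma lin_comb_zero_coeffs:
  assumes "g \<in> {..<n} \<rightarrow> carrier M"
  shows "lin_comb M n (\<lambda>i. \<zero>\<^bsub>R\<^esub>) g = \<zero>\<^bsub>M\<^esub>"
proof -
  have "lin_comb M n (\<lambda>i. \<zero>\<^bsub>R\<^esub>) g = finsum M (\<lambda>i. \<zero>\<^bsub>M\<^esub>) {..<n}"
    unfolding lin_comb_def using assms by (intro M.finsum_cong') (auto simp: Pi_iff)
  then show ?thesis by simp
qed

lemma lin_comb_indicator:
  assumes "j < n" "g \<in> {..<n} \<rightarrow> carrier M"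
  shows "lin_comb M n (\<lambda>i. if i = j then \<one>\<^bsub>R\<^esub> else \<zero>\<^bsub>R\<^esub>) g = g j"
proof -
  have "lin_comb M n (\<lambda>i. if i = j then \<one>\<^bsub>R\<^esub> else \<zero>\<^bsub>R\<^esub>) g
      = finsum M (\<lambda>i. if i = j then g j else \<zero>\<^bsub>M\<^esub>) {..<n}"
    unfolding lin_comb_def using assms by (intro M.finsum_cong') (auto simp: Pi_iff)
  also have "\<dots> = g j"
    using assms by (intro M.add.finprod_singleton_swap) (auto simp: Pi_iff)
  finally show ?thesis .
qed

lemma span_gens_subset_carrier: "g \<in> {..<n} \<rightarrow> carrier M \<Longrightarrow> span_gens R M n g \<subseteq> carrier M"
  unfolding span_gens_def by auto

lemma span_gens_gen:
  assumes "j < n" "g \<in> {..<n} \<rightarrow> carrier M"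
  shows "g j \<in> span_gens R M n g"
  unfolding span_gens_def using lin_comb_indicator[OF assms]
  by (intro CollectI exI[of _ "\<lambda>i. if i = j then \<one>\<^bsub>R\<^esub> else \<zero>\<^bsub>R\<^esub>"]) auto

lemma span_gens_free_coeffs:
  assumes "x \<in> span_gens R M n g" "g \<in> {..<n} \<rightarrow> carrier M"
  obtains c where "c \<in> {..<n} \<rightarrow>\<^sub>E carrier R" "x = lin_comb M n c g"
proof -
  obtain c where "c \<in> {..<n} \<rightarrow> carrier R" "x = lin_comb M n c g"
    using assms(1) unfolding span_gens_def by blast
  then show ?thesis
    using that[of "restrict c {..<n}"] assms(2) by (simp add: lin_comb_restrict_coeffs)
qed

lemma span_gens_append:
  assumes "x \<in> span_gens R M n g" "y \<in> span_gens R M m h"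
    "g \<in> {..<n} \<rightarrow> carrier M" "h \<in> {..<m} \<rightarrow> carrier M"
  shows "x \<oplus>\<^bsub>M\<^esub> y \<in> span_gens R M (n+m) (\<lambda>k. if k < n then g k else h (k - n))"
proof -
  obtain c where c: "c \<in> {..<n} \<rightarrow> carrier R" "x = lin_comb M n c g"
    using assms unfolding span_gens_def by auto
  obtain d where d: "d \<in> {..<m} \<rightarrow> carrier R" "y = lin_comb M m d h"
    using assms unfolding span_gens_def by auto
  let ?G = "\<lambda>k. if k < n then g k else h (k - n)"
  let ?C = "\<lambda>k. if k < n then c k else d (k - n)"
  have C: "?C \<in> {..<n+m} \<rightarrow> carrier R" using c d by (auto simp: Pi_iff)
  have G: "?G \<in> {..<n+m} \<rightarrow> carrier M" using assms by (auto simp: Pi_iff)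
  have "lin_comb M (n+m) ?C ?G
      = lin_comb M n ?C ?G \<oplus>\<^bsub>M\<^esub> lin_comb M m (\<lambda>i. ?C (n+i)) (\<lambda>i. ?G (n+i))"
    by (rule lin_comb_append[OF C G])
  also have "lin_comb M n ?C ?G = x" using c assms by (auto intro!: lin_comb_cong)
  also have "lin_comb M m (\<lambda>i. ?C (n+i)) (\<lambda>i. ?G (n+i)) = y"
    using d assms by (auto intro!: lin_comb_cong)
  finally have "x \<oplus>\<^bsub>M\<^esub> y = lin_comb M (n+m) ?C ?G" by simp
  then show ?thesis unfolding span_gens_def using C by blast
qed

lemma span_gens_zero: "g \<in> {..<n} \<rightarrow> carrier M \<Longrightarrow> \<zero>\<^bsub>M\<^esub> \<in> span_gens R M n g"
  unfolding span_gens_def using lin_comb_zero_coeffs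
  by (intro CollectI exI[of _ "\<lambda>i. \<zero>\<^bsub>R\<^esub>"]) auto

lemma span_gens_add:
  assumes "x \<in> span_gens R M n g" "y \<in> span_gens R M n g" "g \<in> {..<n} \<rightarrow> carrier M"
  shows "x \<oplus>\<^bsub>M\<^esub> y \<in> span_gens R M n g"
proof -
  obtain c d where c: "c \<in> {..<n} \<rightarrow> carrier R" "x = lin_comb M n c g"
    and d: "d \<in> {..<n} \<rightarrow> carrier R" "y = lin_comb M n d g"
    using assms unfolding span_gens_def by auto
  show ?thesis unfolding span_gens_def
    using c d assms(3) lin_comb_add_coeffs[of c n d g]
    by (intro CollectI exI[of _ "\<lambda>i. c i \<oplus>\<^bsub>R\<^esub> d i"]) auto
qed

lemma span_gens_smult:
  assumes "x \<in> span_gens R M n g" "a \<in> carrier R" "g \<in> {..<n} \<rightarrow> carrier M"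
  shows "a \<odot>\<^bsub>M\<^esub> x \<in> span_gens R M n g"
proof -
  obtain c where c: "c \<in> {..<n} \<rightarrow> carrier R" "x = lin_comb M n c g"
    using assms unfolding span_gens_def by auto
  show ?thesis unfolding span_gens_def
    using c assms lin_comb_smult[of a c n g]
    by (intro CollectI exI[of _ "\<lambda>i. a \<otimes>\<^bsub>R\<^esub> c i"]) auto
qed

lemma span_gens_submodule:
  assumes "g \<in> {..<n} \<rightarrow> carrier M"
  shows "submodule (span_gens R M n g) R M"
proof (rule submoduleI)
  show "\<ominus>\<^bsub>M\<^esub> x \<in> span_gens R M n g" if "x \<in> span_gens R M n g" for x
  proof -
    have "x \<in> carrier M" using that span_gens_subset_carrier[OF assms] by auto
    then have "\<ominus>\<^bsub>M\<^esub> x = (\<ominus>\<^bsub>R\<^esub> \<one>\<^bsub>R\<^esub>) \<odot>\<^bsub>M\<^esub> x" by (simp add: smult_l_minus)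
    then show ?thesis using span_gens_smult[OF that _ assms] by simp
  qed
qed (use assms span_gens_subset_carrier span_gens_zero span_gens_add span_gens_smult in auto)

lemma span_gens_least:
  assumes "submodule H R M" "g \<in> {..<n} \<rightarrow> H"
  shows "span_gens R M n g \<subseteq> H"
proof
  fix x assume "x \<in> span_gens R M n g"
  then obtain c where c: "c \<in> {..<n} \<rightarrow> carrier R" "x = lin_comb M n c g"
    unfolding span_gens_def by auto
  have HM: "H \<subseteq> carrier M" using submoduleE(1)[OF assms(1)] .
  have "lin_comb M k c g \<in> H" if "k \<le> n" for k
    using that
  proof (induction k)
    case 0
    then show ?case using subgroup.one_closed[OF submodule.axioms(1)[OF assms(1)]] by simp
  next
    case (Suc k)
    have "lin_comb M (Suc k) c g = lin_comb M k c g \<oplus>\<^bsub>M\<^esub> c k \<odot>\<^bsub>M\<^esub> g k"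
      using Suc.prems assms(2) HM c by (intro lin_comb_Suc) (auto simp: Pi_iff)
    moreover have "c k \<odot>\<^bsub>M\<^esub> g k \<in> H"
      using Suc.prems assms(2) c by (intro submoduleE(4)[OF assms(1)]) (auto simp: Pi_iff)
    ultimately show ?case using Suc submoduleE(5)[OF assms(1)] by simp
  qed
  then show "x \<in> H" using c by auto
qed

lemma fin_genI:
  assumes "submodule N R M" "g \<in> {..<n} \<rightarrow> N" "N \<subseteq> span_gens R M n g"
  shows "fin_gen R M N"
  unfolding fin_gen_def using assms span_gens_least[OF assms(1,2)] by blast

lemma fin_genE:
  assumes "fin_gen R M N" "N \<subseteq> carrier M"
  obtains n g where "g \<in> {..<n} \<rightarrow> N" "N = span_gens R M n g" "g \<in> {..<n} \<rightarrow> carrier M"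
  using assms unfolding fin_gen_def by blast

lemma fin_gen_span_gens:
  assumes "g \<in> {..<n} \<rightarrow> carrier M"
  shows "fin_gen R M (span_gens R M n g)"
proof (rule fin_genI[OF span_gens_submodule[OF assms]])
  show "g \<in> {..<n} \<rightarrow> span_gens R M n g" using span_gens_gen[OF _ assms] by blast
qed simp

lemma fin_gen_submodule:
  assumes "fin_gen R M N" "N \<subseteq> carrier M"
  shows "submodule N R M"
proof -
  obtain n g where "N = span_gens R M n g" "g \<in> {..<n} \<rightarrow> carrier M"
    using fin_genE[OF assms] .
  then show ?thesis using span_gens_submodule by simp
qed

lemma fin_gen_add:
  assumes "fin_gen R M N1" "N1 \<subseteq> N" "fin_gen R M N2" "N2 \<subseteq> N"
    "submodule N R M" "\<And>x. x \<in> N \<Longrightarrow> \<exists>y\<in>N1. \<exists>z\<in>N2. x = y \<oplus>\<^bsub>M\<^esub> z"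
  shows "fin_gen R M N"
proof -
  have "N \<subseteq> carrier M" using submoduleE(1)[OF assms(5)] .
  then have "N1 \<subseteq> carrier M" "N2 \<subseteq> carrier M" using assms(2,4) by auto
  obtain n g where g: "g \<in> {..<n} \<rightarrow> N1" "N1 = span_gens R M n g" "g \<in> {..<n} \<rightarrow> carrier M"
    using fin_genE[OF assms(1) \<open>N1 \<subseteq> carrier M\<close>] .
  obtain m h where h: "h \<in> {..<m} \<rightarrow> N2" "N2 = span_gens R M m h" "h \<in> {..<m} \<rightarrow> carrier M"
    using fin_genE[OF assms(3) \<open>N2 \<subseteq> carrier M\<close>] .
  show ?thesis
  proof (rule fin_genI[OF assms(5)])
    show "(\<lambda>k. if k < n then g k else h (k - n)) \<in> {..<n+m} \<rightarrow> N"
      using g h assms(2,4) by (auto simp: Pi_iff)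
    show "N \<subseteq> span_gens R M (n+m) (\<lambda>k. if k < n then g k else h (k - n))"
    proof
      fix x assume "x \<in> N"
      then obtain y z where "y \<in> N1" "z \<in> N2" "x = y \<oplus>\<^bsub>M\<^esub> z" using assms(6) by blast
      then show "x \<in> span_gens R M (n+m) (\<lambda>k. if k < n then g k else h (k - n))"
        using span_gens_append[of y n g z m h] g h by simp
    qed
  qed
qed

end

section \<open>Linear maps\<close>

definition linear_map ::
  "('a,'n) ring_scheme \<Rightarrow> ('a,'m) module \<Rightarrow> ('a,'k) module \<Rightarrow> ('m \<Rightarrow> 'k) \<Rightarrow> bool" where
  "linear_map R M N \<phi> \<longleftrightarrow> \<phi> \<in> carrier M \<rightarrow> carrier N \<and>
    (\<forall>x\<in>carrier M. \<forall>y\<in>carrier M. \<phi> (x \<oplus>\<^bsub>M\<^esub> y) = \<phi> x \<oplus>\<^bsub>N\<^esub> \<phi> y) \<and>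
    (\<forall>a\<in>carrier R. \<forall>x\<in>carrier M. \<phi> (a \<odot>\<^bsub>M\<^esub> x) = a \<odot>\<^bsub>N\<^esub> \<phi> x)"

lemma linear_mapD:
  assumes "linear_map R M N \<phi>"
  shows linear_map_closed: "\<And>x. x \<in> carrier M \<Longrightarrow> \<phi> x \<in> carrier N"
    and linear_map_add: "\<And>x y. x \<in> carrier M \<Longrightarrow> y \<in> carrier M \<Longrightarrow> \<phi> (x \<oplus>\<^bsub>M\<^esub> y) = \<phi> x \<oplus>\<^bsub>N\<^esub> \<phi> y"
    and linear_map_smult: "\<And>a x. a \<in> carrier R \<Longrightarrow> x \<in> carrier M \<Longrightarrow> \<phi> (a \<odot>\<^bsub>M\<^esub> x) = a \<odot>\<^bsub>N\<^esub> \<phi> x"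
  using assms unfolding linear_map_def by auto

context
  fixes R :: "('a,'n) ring_scheme" and M :: "('a,'b) module" and N :: "('a,'c) module" and \<phi>
  assumes M: "plain_module R M" and N: "plain_module R N" and \<phi>: "linear_map R M N \<phi>"
begin

interpretation M: plain_module R M by (rule M)
interpretation N: plain_module R N by (rule N)

lemma linear_map_zero: "\<phi> \<zero>\<^bsub>M\<^esub> = \<zero>\<^bsub>N\<^esub>"
proof -
  have "\<phi> (\<zero>\<^bsub>R\<^esub> \<odot>\<^bsub>M\<^esub> \<zero>\<^bsub>M\<^esub>) = \<zero>\<^bsub>R\<^esub> \<odot>\<^bsub>N\<^esub> \<phi> \<zero>\<^bsub>M\<^esub>"
    by (rule linear_map_smult[OF \<phi>]) auto
  then show ?thesis using linear_map_closed[OF \<phi>, of "\<zero>\<^bsub>M\<^esub>"] by simp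
qed

lemma linear_map_neg:
  assumes "x \<in> carrier M"
  shows "\<phi> (\<ominus>\<^bsub>M\<^esub> x) = \<ominus>\<^bsub>N\<^esub> \<phi> x"
proof -
  have "\<phi> (\<ominus>\<^bsub>M\<^esub> x) \<oplus>\<^bsub>N\<^esub> \<phi> x = \<phi> (\<ominus>\<^bsub>M\<^esub> x \<oplus>\<^bsub>M\<^esub> x)"
    using linear_map_add[OF \<phi>] assms by simp
  also have "\<dots> = \<zero>\<^bsub>N\<^esub>" using assms linear_map_zero by (simp add: M.l_neg)
  finally show ?thesis
    using linear_map_closed[OF \<phi>] assms by (intro N.add.inv_equality[symmetric]) auto
qed

lemma linear_map_diff:
  assumes "x \<in> carrier M" "y \<in> carrier M"
  shows "\<phi> (x \<ominus>\<^bsub>M\<^esub> y) = \<phi> x \<ominus>\<^bsub>N\<^esub> \<phi> y"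
  using assms linear_mapD[OF \<phi>] linear_map_neg by (simp add: a_minus_def)

lemma linear_map_lin_comb:
  assumes "c \<in> {..<n} \<rightarrow> carrier R" "g \<in> {..<n} \<rightarrow> carrier M"
  shows "\<phi> (lin_comb M n c g) = lin_comb N n c (\<lambda>i. \<phi> (g i))"
  using assms
proof (induction n)
  case 0
  then show ?case using linear_map_zero by simp
next
  case (Suc n)
  have c: "c \<in> {..<n} \<rightarrow> carrier R" and g: "g \<in> {..<n} \<rightarrow> carrier M" using Suc.prems by auto
  have "(\<lambda>i. \<phi> (g i)) \<in> {..<Suc n} \<rightarrow> carrier N"
    using Suc.prems linear_map_closed[OF \<phi>] by auto
  then show ?case
    using Suc.prems Suc.IH[OF c g] c g linear_mapD[OF \<phi>]
    by (simp add: M.lin_comb_Suc N.lin_comb_Suc M.lin_comb_closed Pi_iff)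
qed

lemma linear_map_kernel_submodule: "submodule {x \<in> carrier M. \<phi> x = \<zero>\<^bsub>N\<^esub>} R M"
  by (rule M.submoduleI) (auto simp: linear_map_zero linear_map_neg linear_mapD[OF \<phi>])

lemma linear_map_image_span_gens:
  assumes "g \<in> {..<n} \<rightarrow> carrier M"
  shows "\<phi> ` span_gens R M n g = span_gens R N n (\<lambda>i. \<phi> (g i))"
proof -
  have lc: "\<phi> (lin_comb M n c g) = lin_comb N n c (\<lambda>i. \<phi> (g i))" if "c \<in> {..<n} \<rightarrow> carrier R" for c
    using linear_map_lin_comb[OF that assms] .
  show ?thesis
  proof (rule Set.set_eqI)
    fix x
    have "x \<in> \<phi> ` span_gens R M n g \<longleftrightarrow> (\<exists>c \<in> {..<n} \<rightarrow> carrier R. x = \<phi> (lin_comb M n c g))"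
      unfolding span_gens_def by blast
    also have "\<dots> \<longleftrightarrow> (\<exists>c \<in> {..<n} \<rightarrow> carrier R. x = lin_comb N n c (\<lambda>i. \<phi> (g i)))"
      using lc by auto
    also have "\<dots> \<longleftrightarrow> x \<in> span_gens R N n (\<lambda>i. \<phi> (g i))"
      unfolding span_gens_def by blast
    finally show "x \<in> \<phi> ` span_gens R M n g \<longleftrightarrow> x \<in> span_gens R N n (\<lambda>i. \<phi> (g i))" .
  qed
qed

lemma fin_gen_image:
  assumes "fin_gen R M L" "L \<subseteq> carrier M"
  shows "fin_gen R N (\<phi> ` L)"
proof -
  obtain n g where g: "g \<in> {..<n} \<rightarrow> L" "L = span_gens R M n g" "g \<in> {..<n} \<rightarrow> carrier M"
    using M.fin_genE[OF assms] .
  have "\<phi> ` L = span_gens R N n (\<lambda>i. \<phi> (g i))"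
    using linear_map_image_span_gens[OF g(3)] g(2) by simp
  moreover have "(\<lambda>i. \<phi> (g i)) \<in> {..<n} \<rightarrow> \<phi> ` L" using g(1) by auto
  ultimately show ?thesis unfolding fin_gen_def by blast
qed

lemma fin_pres_bij:
  assumes "bij_betw \<phi> (carrier M) (carrier N)" "fin_pres R M"
  shows "fin_pres R N"
proof -
  obtain n g where g: "g \<in> {..<n} \<rightarrow> carrier M" "carrier M = span_gens R M n g"
    "fin_gen R (free_module R n) (relations R M n g)"
    using assms(2) unfolding fin_pres_def by blast
  have \<phi>g: "(\<lambda>i. \<phi> (g i)) \<in> {..<n} \<rightarrow> carrier N" using g(1) linear_map_closed[OF \<phi>] by auto
  have span: "carrier N = span_gens R N n (\<lambda>i. \<phi> (g i))"
    using linear_map_image_span_gens[OF g(1)] g(2) assms(1) unfolding bij_betw_def by simp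
  have "lin_comb N n c (\<lambda>i. \<phi> (g i)) = \<zero>\<^bsub>N\<^esub> \<longleftrightarrow> lin_comb M n c g = \<zero>\<^bsub>M\<^esub>"
    if "c \<in> {..<n} \<rightarrow>\<^sub>E carrier R" for c
  proof -
    have c: "c \<in> {..<n} \<rightarrow> carrier R" using that by (simp add: PiE_def)
    have "lin_comb N n c (\<lambda>i. \<phi> (g i)) = \<phi> (lin_comb M n c g)"
      using linear_map_lin_comb[OF c g(1)] by simp
    moreover have "lin_comb M n c g \<in> carrier M" using c g(1) by (rule M.lin_comb_closed)
    ultimately show ?thesis
      using assms(1) linear_map_zero unfolding bij_betw_def inj_on_def by (metis M.zero_closed)
  qed
  then have "relations R N n (\<lambda>i. \<phi> (g i)) = relations R M n g"
    unfolding relations_def by blast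
  then show ?thesis unfolding fin_pres_def using \<phi>g span g(3) by metis
qed

end

section \<open>Submodules, free modules and rings as modules\<close>

lemma plain_module_restrict:
  assumes "plain_module R M" "submodule H R M"
  shows "plain_module R (M\<lparr>carrier := H\<rparr>)"
  using submodule.submodule_is_module[OF assms(2)] assms(1) unfolding plain_module_def by simp

lemma submodule_of_restrict:
  assumes "plain_module R M" "submodule H R M" "submodule K R (M\<lparr>carrier := H\<rparr>)"
  shows "submodule K R M"
proof (rule module.module_incl_imp_submodule)
  show "module R M" using assms(1) unfolding plain_module_def .
  show "K \<subseteq> carrier M"
    using subgroup.subset[OF submodule.axioms(1)[OF assms(3)]]
      subgroup.subset[OF submodule.axioms(1)[OF assms(2)]] by simp
  show "module R (M\<lparr>carrier := K\<rparr>)"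
    using plain_module_restrict[OF plain_module_restrict[OF assms(1,2)] assms(3)]
    unfolding plain_module_def by simp
qed

lemma lin_comb_restrict:
  assumes "plain_module R M" "submodule H R M" "g \<in> {..<n} \<rightarrow> H" "c \<in> {..<n} \<rightarrow> carrier R"
  shows "lin_comb (M\<lparr>carrier := H\<rparr>) n c g = lin_comb M n c g"
proof -
  interpret M: plain_module R M by fact
  interpret H: plain_module R "M\<lparr>carrier := H\<rparr>" by (rule plain_module_restrict[OF assms(1,2)])
  have HM: "H \<subseteq> carrier M" using M.submoduleE(1)[OF assms(2)] .
  show ?thesis using assms(3,4)
  proof (induction n)
    case 0
    then show ?case by simp
  next
    case (Suc n)
    have IH: "lin_comb (M\<lparr>carrier := H\<rparr>) n c g = lin_comb M n c g"
      by (rule Suc.IH) (use Suc.prems in auto)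
    have "g \<in> {..<Suc n} \<rightarrow> carrier (M\<lparr>carrier := H\<rparr>)" "g \<in> {..<Suc n} \<rightarrow> carrier M"
      using Suc.prems HM by auto
    then show ?case using H.lin_comb_Suc M.lin_comb_Suc IH Suc.prems(2) by simp
  qed
qed

lemma span_gens_restrict:
  assumes "plain_module R M" "submodule H R M" "g \<in> {..<n} \<rightarrow> H"
  shows "span_gens R (M\<lparr>carrier := H\<rparr>) n g = span_gens R M n g"
  unfolding span_gens_def using lin_comb_restrict[OF assms] by (metis (no_types, lifting))

lemma fin_gen_restrict:
  assumes "plain_module R M" "submodule H R M" "L \<subseteq> H"
  shows "fin_gen R (M\<lparr>carrier := H\<rparr>) L \<longleftrightarrow> fin_gen R M L"
proof -
  have "g \<in> {..<n} \<rightarrow> L \<Longrightarrow> span_gens R (M\<lparr>carrier := H\<rparr>) n g = span_gens R M n g" for n g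
    using span_gens_restrict[OF assms(1,2)] assms(3) by blast
  then show ?thesis unfolding fin_gen_def by metis
qed

lemma relations_restrict:
  assumes "plain_module R M" "submodule H R M" "g \<in> {..<n} \<rightarrow> H"
  shows "relations R (M\<lparr>carrier := H\<rparr>) n g = relations R M n g"
  unfolding relations_def using lin_comb_restrict[OF assms] by (auto simp: PiE_def)

lemma fin_pres_restrict_iff:
  assumes "plain_module R M" "submodule H R M"
  shows "fin_pres R (M\<lparr>carrier := H\<rparr>) \<longleftrightarrow>
    (\<exists>n g. g \<in> {..<n} \<rightarrow> H \<and> H = span_gens R M n g \<and> fin_gen R (free_module R n) (relations R M n g))"
  unfolding fin_pres_def using span_gens_restrict[OF assms] relations_restrict[OF assms]
  by (metis partial_object.select_convs(1) partial_object.surjective partial_object.update_convs(1))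

lemma finsum_same_structure:
  "carrier M = carrier N \<Longrightarrow> ring.add M = ring.add N \<Longrightarrow> ring.zero M = ring.zero N \<Longrightarrow>
   finsum M f A = finsum N f A"
  by (simp add: finsum_def finprod_def)

lemma free_module_simps [simp]:
  "carrier (free_module R n) = {..<n} \<rightarrow>\<^sub>E carrier R"
  "x \<oplus>\<^bsub>free_module R n\<^esub> y = (\<lambda>i\<in>{..<n}. x i \<oplus>\<^bsub>R\<^esub> y i)"
  "\<zero>\<^bsub>free_module R n\<^esub> = (\<lambda>i\<in>{..<n}. \<zero>\<^bsub>R\<^esub>)"
  "a \<odot>\<^bsub>free_module R n\<^esub> x = (\<lambda>i\<in>{..<n}. a \<otimes>\<^bsub>R\<^esub> x i)"
  by (simp_all add: free_module_def)

lemma plain_module_free_module: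
  assumes "cring R"
  shows "plain_module R (free_module R n)"
proof -
  interpret R: cring R by fact
  have "abelian_group (free_module R n)"
  proof (rule abelian_groupI)
    fix x assume x: "x \<in> carrier (free_module R n)"
    show "\<exists>y\<in>carrier (free_module R n). y \<oplus>\<^bsub>free_module R n\<^esub> x = \<zero>\<^bsub>free_module R n\<^esub>"
      using x by (intro bexI[of _ "\<lambda>i\<in>{..<n}. \<ominus>\<^bsub>R\<^esub> x i"]) (auto simp: PiE_iff R.l_neg)
  qed (auto simp: PiE_iff extensional_def R.a_ac)
  then have "module R (free_module R n)"
    by (rule moduleI[OF assms])
      (auto simp: PiE_iff extensional_def R.l_distr R.r_distr R.m_assoc)
  then show ?thesis by (simp add: plain_module_def)
qed

lemma linear_map_lin_comb_gens:
  assumes "plain_module R M" "g \<in> {..<n} \<rightarrow> carrier M"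
  shows "linear_map R (free_module R n) M (\<lambda>c. lin_comb M n c g)"
proof -
  interpret M: plain_module R M by fact
  show ?thesis unfolding linear_map_def
  proof (intro conjI ballI)
    show "(\<lambda>c. lin_comb M n c g) \<in> carrier (free_module R n) \<rightarrow> carrier M"
      using assms(2) by (auto intro!: M.lin_comb_closed)
  next
    fix x y assume x: "x \<in> carrier (free_module R n)" and y: "y \<in> carrier (free_module R n)"
    have "lin_comb M n (x \<oplus>\<^bsub>free_module R n\<^esub> y) g = lin_comb M n (\<lambda>i. x i \<oplus>\<^bsub>R\<^esub> y i) g"
      using x y assms(2) by (intro M.lin_comb_cong) auto
    also have "\<dots> = lin_comb M n x g \<oplus>\<^bsub>M\<^esub> lin_comb M n y g"
      using x y assms(2) by (intro M.lin_comb_add_coeffs) auto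
    finally show "lin_comb M n (x \<oplus>\<^bsub>free_module R n\<^esub> y) g = lin_comb M n x g \<oplus>\<^bsub>M\<^esub> lin_comb M n y g" .
  next
    fix a x assume a: "a \<in> carrier R" and x: "x \<in> carrier (free_module R n)"
    have "lin_comb M n (a \<odot>\<^bsub>free_module R n\<^esub> x) g = lin_comb M n (\<lambda>i. a \<otimes>\<^bsub>R\<^esub> x i) g"
      using a x assms(2) by (intro M.lin_comb_cong) auto
    also have "\<dots> = a \<odot>\<^bsub>M\<^esub> lin_comb M n x g"
      using a x assms(2) by (intro M.lin_comb_smult) auto
    finally show "lin_comb M n (a \<odot>\<^bsub>free_module R n\<^esub> x) g = a \<odot>\<^bsub>M\<^esub> lin_comb M n x g" .
  qed
qed

lemma relations_submodule:
  assumes "plain_module R M" "g \<in> {..<n} \<rightarrow> carrier M"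
  shows "submodule (relations R M n g) R (free_module R n)"
proof -
  interpret M: plain_module R M by fact
  have "relations R M n g = {c \<in> carrier (free_module R n). lin_comb M n c g = \<zero>\<^bsub>M\<^esub>}"
    unfolding relations_def by simp
  then show ?thesis
    using linear_map_kernel_submodule[OF plain_module_free_module[OF M.is_cring] assms(1)
        linear_map_lin_comb_gens[OF assms]] by simp
qed

definition unit_vector :: "('a,'n) ring_scheme \<Rightarrow> nat \<Rightarrow> nat \<Rightarrow> nat \<Rightarrow> 'a" where
  "unit_vector R n j = (\<lambda>i\<in>{..<n}. if i = j then \<one>\<^bsub>R\<^esub> else \<zero>\<^bsub>R\<^esub>)"

lemma unit_vector_closed: "ring R \<Longrightarrow> unit_vector R n j \<in> carrier (free_module R n)"
  unfolding unit_vector_def by (auto dest: ring.ring_simprules(2,6))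

lemma lin_comb_unit_vectors:
  assumes "cring R" "x \<in> carrier (free_module R n)"
  shows "lin_comb (free_module R n) n x (unit_vector R n) = x"
proof -
  interpret R: cring R by fact
  interpret F: plain_module R "free_module R n" by (rule plain_module_free_module[OF assms(1)])
  have x: "x \<in> {..<n} \<rightarrow> carrier R" using assms(2) by auto
  have e: "unit_vector R n \<in> {..<n} \<rightarrow> carrier (free_module R n)"
    using unit_vector_closed[OF R.ring_axioms] by auto
  have "lin_comb (free_module R n) k x (unit_vector R n) = (\<lambda>i\<in>{..<n}. if i < k then x i else \<zero>\<^bsub>R\<^esub>)"
    if "k \<le> n" for k
    using that
  proof (induction k)
    case 0
    then show ?case by simp
  next
    case (Suc k)
    have "lin_comb (free_module R n) (Suc k) x (unit_vector R n)
        = lin_comb (free_module R n) k x (unit_vector R n) \<oplus>\<^bsub>free_module R n\<^esub>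
          x k \<odot>\<^bsub>free_module R n\<^esub> unit_vector R n k"
      using x e Suc.prems by (intro F.lin_comb_Suc) auto
    also have "\<dots> = (\<lambda>i\<in>{..<n}. if i < Suc k then x i else \<zero>\<^bsub>R\<^esub>)"
      unfolding Suc.IH[OF Suc_leD[OF Suc.prems]] using x Suc.prems
      by (intro ext) (auto simp: unit_vector_def less_Suc_eq Pi_iff)
    finally show ?case .
  qed
  from this[of n] show ?thesis
    using assms(2) by (auto simp: fun_eq_iff PiE_iff extensional_def)
qed

lemma fin_gen_free_module:
  assumes "cring R"
  shows "fin_gen R (free_module R n) (carrier (free_module R n))"
proof -
  interpret F: plain_module R "free_module R n" by (rule plain_module_free_module[OF assms])
  have e: "unit_vector R n \<in> {..<n} \<rightarrow> carrier (free_module R n)"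
    using unit_vector_closed[OF cring.axioms(1)[OF assms]] by auto
  show ?thesis
  proof (rule F.fin_genI[OF F.carrier_is_submodule e])
    show "carrier (free_module R n) \<subseteq> span_gens R (free_module R n) n (unit_vector R n)"
    proof
      fix x assume x: "x \<in> carrier (free_module R n)"
      then have "x = lin_comb (free_module R n) n x (unit_vector R n)"
        using lin_comb_unit_vectors[OF assms] by simp
      moreover have "x \<in> {..<n} \<rightarrow> carrier R" using x by auto
      ultimately show "x \<in> span_gens R (free_module R n) n (unit_vector R n)"
        unfolding span_gens_def by blast
    qed
  qed
qed

lemma ring_module_simps [simp]:
  "carrier (ring_module R) = carrier R"
  "x \<oplus>\<^bsub>ring_module R\<^esub> y = x \<oplus>\<^bsub>R\<^esub> y"
  "\<zero>\<^bsub>ring_module R\<^esub> = \<zero>\<^bsub>R\<^esub>"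
  "a \<odot>\<^bsub>ring_module R\<^esub> x = a \<otimes>\<^bsub>R\<^esub> x"
  "x \<otimes>\<^bsub>ring_module R\<^esub> y = x \<otimes>\<^bsub>R\<^esub> y"
  "\<one>\<^bsub>ring_module R\<^esub> = \<one>\<^bsub>R\<^esub>"
  by (simp_all add: ring_module_def)

lemma a_inv_ring_module [simp]: "\<ominus>\<^bsub>ring_module R\<^esub> x = \<ominus>\<^bsub>R\<^esub> x"
  by (simp add: a_inv_def m_inv_def ring_module_def)

lemma plain_module_ring_module:
  assumes "cring R"
  shows "plain_module R (ring_module R)"
proof -
  interpret R: cring R by fact
  have "abelian_group (ring_module R)"
    by (rule abelian_groupI) (auto simp: R.a_ac intro: R.l_neg)
  then have "module R (ring_module R)"
    by (rule moduleI[OF assms]) (auto simp: R.l_distr R.r_distr R.m_assoc)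
  then show ?thesis by (simp add: plain_module_def)
qed

lemma lin_comb_ring_module:
  "lin_comb (ring_module R) n c g = finsum R (\<lambda>i. c i \<otimes>\<^bsub>R\<^esub> g i) {..<n}"
  unfolding lin_comb_def ring_module_simps(4)
  by (rule finsum_same_structure) (simp_all add: ring_module_def)

lemma ring_hom_lin_comb_ring_module:
  assumes "ring_hom_cring R R' \<phi>" "c \<in> {..<n} \<rightarrow> carrier R" "g \<in> {..<n} \<rightarrow> carrier R"
  shows "\<phi> (lin_comb (ring_module R) n c g)
       = lin_comb (ring_module R') n (\<lambda>i. \<phi> (c i)) (\<lambda>i. \<phi> (g i))"
proof -
  interpret h: ring_hom_cring R R' \<phi> by fact
  have "\<phi> (finsum R (\<lambda>i. c i \<otimes>\<^bsub>R\<^esub> g i) {..<n}) = finsum R' (\<phi> \<circ> (\<lambda>i. c i \<otimes>\<^bsub>R\<^esub> g i)) {..<n}"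
    using assms by (intro h.hom_finsum) auto
  also have "\<dots> = finsum R' (\<lambda>i. \<phi> (c i) \<otimes>\<^bsub>R'\<^esub> \<phi> (g i)) {..<n}"
    using assms by (intro h.S.finsum_cong') (auto simp: Pi_iff)
  finally show ?thesis unfolding lin_comb_ring_module .
qed

lemma ideal_submodule:
  assumes "cring R" "ideal I R"
  shows "submodule I R (ring_module R)"
proof -
  interpret M: plain_module R "ring_module R" by (rule plain_module_ring_module[OF assms(1)])
  interpret I: ideal I R by fact
  show ?thesis
    by (rule M.submoduleI) (auto simp: I.a_subset I.I_l_closed I.a_inv_closed a_inv_def[symmetric])
qed

lemma fin_gen_ring_module:
  assumes "cring R"
  shows "fin_gen R (ring_module R) (carrier R)"
proof -
  interpret R: cring R by fact
  interpret M: plain_module R "ring_module R" by (rule plain_module_ring_module[OF assms])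
  show ?thesis
  proof (rule M.fin_genI)
    show "submodule (carrier R) R (ring_module R)" using M.carrier_is_submodule by simp
    show "(\<lambda>i. \<one>\<^bsub>R\<^esub>) \<in> {..<1} \<rightarrow> carrier R" by auto
    show "carrier R \<subseteq> span_gens R (ring_module R) 1 (\<lambda>i. \<one>\<^bsub>R\<^esub>)"
    proof
      fix x assume x: "x \<in> carrier R"
      have "lin_comb (ring_module R) 1 (\<lambda>i. x) (\<lambda>i. \<one>\<^bsub>R\<^esub>) = x"
        using M.lin_comb_Suc[of "\<lambda>i. x" 0 "\<lambda>i. \<one>\<^bsub>R\<^esub>"] x by simp
      then show "x \<in> span_gens R (ring_module R) 1 (\<lambda>i. \<one>\<^bsub>R\<^esub>)"
        unfolding span_gens_def using x by force
    qed
  qed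
qed

section \<open>Restriction of scalars\<close>

definition restrict_scalars :: "('a \<Rightarrow> 'b) \<Rightarrow> ('b, 'm) module \<Rightarrow> ('a, 'm) module" where
  "restrict_scalars h M =
     \<lparr>carrier = carrier M, monoid.mult = monoid.mult M, monoid.one = monoid.one M,
      ring.zero = ring.zero M, ring.add = ring.add M, module.smult = (\<lambda>a x. h a \<odot>\<^bsub>M\<^esub> x)\<rparr>"

lemma restrict_scalars_simps [simp]:
  "carrier (restrict_scalars h M) = carrier M"
  "x \<oplus>\<^bsub>restrict_scalars h M\<^esub> y = x \<oplus>\<^bsub>M\<^esub> y"
  "\<zero>\<^bsub>restrict_scalars h M\<^esub> = \<zero>\<^bsub>M\<^esub>"
  "a \<odot>\<^bsub>restrict_scalars h M\<^esub> x = h a \<odot>\<^bsub>M\<^esub> x"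
  by (simp_all add: restrict_scalars_def)

lemma a_inv_restrict_scalars [simp]: "\<ominus>\<^bsub>restrict_scalars h M\<^esub> x = \<ominus>\<^bsub>M\<^esub> x"
  by (simp add: a_inv_def m_inv_def restrict_scalars_def)

lemma restrict_scalars_update_carrier:
  "(restrict_scalars h M)\<lparr>carrier := H\<rparr> = restrict_scalars h (M\<lparr>carrier := H\<rparr>)"
  by (simp add: restrict_scalars_def)

lemma lin_comb_restrict_scalars:
  "lin_comb (restrict_scalars h M) n c g = lin_comb M n (\<lambda>i. h (c i)) g"
  unfolding lin_comb_def restrict_scalars_simps(4)
  by (rule finsum_same_structure) (simp_all add: restrict_scalars_def)

lemma plain_module_restrict_scalars:
  assumes "plain_module S M" "cring A" "h \<in> ring_hom A S"
  shows "plain_module A (restrict_scalars h M)"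
proof -
  interpret M: plain_module S M by fact
  interpret A: cring A by fact
  have "abelian_group (restrict_scalars h M)"
    by (rule abelian_groupI) (auto simp: M.a_ac intro: M.l_neg)
  then have "module A (restrict_scalars h M)"
    by (rule moduleI[OF assms(2)])
      (auto simp: ring_hom_closed[OF assms(3)] M.smult_l_distr M.smult_r_distr M.smult_assoc1
        ring_hom_add[OF assms(3)] ring_hom_mult[OF assms(3)] ring_hom_one[OF assms(3)])
  then show ?thesis by (simp add: plain_module_def)
qed

lemma submodule_restrict_scalars:
  assumes "plain_module S M" "cring A" "h \<in> ring_hom A S" "submodule N S M"
  shows "submodule N A (restrict_scalars h M)"
proof -
  interpret M: plain_module S M by fact
  interpret MA: plain_module A "restrict_scalars h M" by (rule plain_module_restrict_scalars[OF assms(1-3)])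
  show ?thesis
    using M.submoduleE[OF assms(4)] subgroup.one_closed[OF submodule.axioms(1)[OF assms(4)]]
      ring_hom_closed[OF assms(3)]
    by (intro MA.submoduleI) auto
qed

lemma linear_map_restrict_scalars:
  assumes "linear_map S M N \<phi>" "h \<in> ring_hom A S"
  shows "linear_map A (restrict_scalars h M) (restrict_scalars h N) \<phi>"
  using assms unfolding linear_map_def by (auto simp: ring_hom_closed)

lemma span_gens_restrict_scalars_subset:
  assumes "h \<in> ring_hom A S"
  shows "span_gens A (restrict_scalars h M) n g \<subseteq> span_gens S M n g"
  unfolding span_gens_def lin_comb_restrict_scalars using ring_hom_closed[OF assms] by fastforce

section \<open>Kernels and extensions of finitely presented modules\<close>

lemma linear_map_lift_free:
  fixes F :: "('a,'b) module" and M :: "('a,'c) module"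
  assumes F: "plain_module R F" and M: "plain_module R M" and \<phi>: "linear_map R F M \<phi>"
    and surj: "\<And>y. y \<in> carrier M \<Longrightarrow> \<exists>x\<in>carrier F. \<phi> x = y"
    and g: "g \<in> {..<n} \<rightarrow> carrier M"
  shows "\<exists>\<psi>. linear_map R (free_module R n) F \<psi> \<and>
    (\<forall>c\<in>carrier (free_module R n). \<phi> (\<psi> c) = lin_comb M n c g)"
proof -
  interpret M: plain_module R M by fact
  obtain p where p: "\<And>i. i < n \<Longrightarrow> p i \<in> carrier F \<and> \<phi> (p i) = g i"
    using choice_lessThan[of n "\<lambda>i x. x \<in> carrier F \<and> \<phi> x = g i"] surj g by blast
  have p_closed: "p \<in> {..<n} \<rightarrow> carrier F" using p by auto
  have "\<phi> (lin_comb F n c p) = lin_comb M n c g" if "c \<in> carrier (free_module R n)" for c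
  proof -
    have c: "c \<in> {..<n} \<rightarrow> carrier R" using that by auto
    have "\<phi> (lin_comb F n c p) = lin_comb M n c (\<lambda>i. \<phi> (p i))"
      by (rule linear_map_lin_comb[OF F M \<phi> c p_closed])
    also have "\<dots> = lin_comb M n c g" using c p g by (intro M.lin_comb_cong) auto
    finally show ?thesis .
  qed
  then show ?thesis using linear_map_lin_comb_gens[OF F p_closed] by blast
qed

lemma (in plain_module) span_gens_free_coeffs_family:
  assumes "y \<in> {..<m} \<rightarrow> span_gens R M n g" "g \<in> {..<n} \<rightarrow> carrier M"
  obtains w where "w \<in> {..<m} \<rightarrow> carrier (free_module R n)" "\<And>j. j < m \<Longrightarrow> lin_comb M n (w j) g = y j"
proof -
  have "\<exists>c. c \<in> carrier (free_module R n) \<and> lin_comb M n c g = y j" if "j < m" for j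
    using span_gens_free_coeffs[OF _ assms(2)] assms(1) that by (metis PiE free_module_simps(1) lessThan_iff)
  then obtain w where "\<And>j. j < m \<Longrightarrow> w j \<in> carrier (free_module R n) \<and> lin_comb M n (w j) g = y j"
    using choice_lessThan[of m "\<lambda>j c. c \<in> carrier (free_module R n) \<and> lin_comb M n c g = y j"] by blast
  then have "w \<in> {..<m} \<rightarrow> carrier (free_module R n)" "\<And>j. j < m \<Longrightarrow> lin_comb M n (w j) g = y j"
    by auto
  then show ?thesis by (rule that)
qed

(*
  For a surjection \<phi> : F \<rightarrow> M, \<psi> lifts the generators g of M to F and w expresses \<phi> of the
  generators e of F in terms of g. Then ker \<phi> is spanned by \<psi> of the relations among g
  together with the corrections e j - \<psi> (w j).
*)
context
  fixes R :: "('a,'r) ring_scheme" and F :: "('a,'b) module" and M :: "('a,'c) module"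
    and \<phi> \<psi> and n m :: nat and g e w
  assumes F: "plain_module R F" and M: "plain_module R M" and \<phi>: "linear_map R F M \<phi>"
    and \<psi>: "linear_map R (free_module R n) F \<psi>"
    and \<phi>_\<psi>: "\<And>c. c \<in> carrier (free_module R n) \<Longrightarrow> \<phi> (\<psi> c) = lin_comb M n c g"
    and e: "e \<in> {..<m} \<rightarrow> carrier F"
    and w_closed: "w \<in> {..<m} \<rightarrow> carrier (free_module R n)"
    and w: "\<And>j. j < m \<Longrightarrow> lin_comb M n (w j) g = \<phi> (e j)"
begin

interpretation F: plain_module R F by (rule F)
interpretation M: plain_module R M by (rule M)
interpretation Fr: plain_module R "free_module R n" by (rule plain_module_free_module[OF F.is_cring])

private abbreviation corr where "corr \<equiv> \<lambda>j. e j \<ominus>\<^bsub>F\<^esub> \<psi> (w j)"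

lemma kernel_corrections_closed: "corr \<in> {..<m} \<rightarrow> carrier F"
proof
  fix j assume j: "j \<in> {..<m}"
  show "corr j \<in> carrier F"
    using funcset_mem[OF e j] linear_map_closed[OF \<psi> funcset_mem[OF w_closed j]] by (rule F.minus_closed)
qed

lemma kernel_corrections_in_kernel: "corr \<in> {..<m} \<rightarrow> {x \<in> carrier F. \<phi> x = \<zero>\<^bsub>M\<^esub>}"
proof
  fix j assume j: "j \<in> {..<m}"
  have ej: "e j \<in> carrier F" and wj: "w j \<in> carrier (free_module R n)"
    using funcset_mem[OF e j] funcset_mem[OF w_closed j] .
  have "\<phi> (corr j) = \<phi> (e j) \<ominus>\<^bsub>M\<^esub> \<phi> (e j)"
    unfolding linear_map_diff[OF F M \<phi> ej linear_map_closed[OF \<psi> wj]] \<phi>_\<psi>[OF wj] w[OF j[simplified]] ..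
  then show "corr j \<in> {x \<in> carrier F. \<phi> x = \<zero>\<^bsub>M\<^esub>}"
    using funcset_mem[OF kernel_corrections_closed j] linear_map_closed[OF \<phi> ej]
    by (simp add: M.r_neg a_minus_def)
qed

lemma kernel_decomposition:
  assumes c: "c \<in> {..<m} \<rightarrow> carrier R" and x0: "\<phi> (lin_comb F m c e) = \<zero>\<^bsub>M\<^esub>"
  shows "lin_comb (free_module R n) m c w \<in> relations R M n g"
    and "lin_comb F m c e = \<psi> (lin_comb (free_module R n) m c w) \<oplus>\<^bsub>F\<^esub> lin_comb F m c corr"
proof -
  define W where "W = lin_comb (free_module R n) m c w"
  have W: "W \<in> carrier (free_module R n)" unfolding W_def by (rule Fr.lin_comb_closed[OF c w_closed])
  have \<psi>w_closed: "(\<lambda>j. \<psi> (w j)) \<in> {..<m} \<rightarrow> carrier F"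
    using w_closed linear_map_closed[OF \<psi>] by (auto simp del: free_module_simps)
  have corr_closed: "lin_comb F m c corr \<in> carrier F"
    by (rule F.lin_comb_closed[OF c kernel_corrections_closed])
  have "lin_comb F m c e = lin_comb F m c (\<lambda>j. corr j \<oplus>\<^bsub>F\<^esub> \<psi> (w j))"
    using c e \<psi>w_closed by (intro F.lin_comb_cong) (auto simp: a_minus_def F.a_assoc F.l_neg Pi_iff)
  also have "\<dots> = lin_comb F m c corr \<oplus>\<^bsub>F\<^esub> lin_comb F m c (\<lambda>j. \<psi> (w j))"
    by (rule F.lin_comb_add_gens[OF c kernel_corrections_closed \<psi>w_closed])
  also have "lin_comb F m c (\<lambda>j. \<psi> (w j)) = \<psi> W"
    unfolding W_def by (rule linear_map_lin_comb[OF Fr.plain_module_axioms F \<psi> c w_closed, symmetric])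
  finally have decomp: "lin_comb F m c e = \<psi> W \<oplus>\<^bsub>F\<^esub> lin_comb F m c corr"
    using corr_closed linear_map_closed[OF \<psi> W] by (simp add: F.a_comm)
  then show "lin_comb F m c e = \<psi> W \<oplus>\<^bsub>F\<^esub> lin_comb F m c corr" .
  have "lin_comb F m c corr \<in> span_gens R F m corr" using c unfolding span_gens_def by blast
  then have "\<phi> (lin_comb F m c corr) = \<zero>\<^bsub>M\<^esub>"
    using F.span_gens_least[OF linear_map_kernel_submodule[OF F M \<phi>] kernel_corrections_in_kernel]
    by auto
  then have "\<phi> (\<psi> W) = \<zero>\<^bsub>M\<^esub>"
    using x0 linear_map_add[OF \<phi> linear_map_closed[OF \<psi> W] corr_closed]
      linear_map_closed[OF \<phi> linear_map_closed[OF \<psi> W]]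
    by (simp add: decomp)
  then show "W \<in> relations R M n g" using W \<phi>_\<psi>[OF W] unfolding relations_def by simp
qed

end

lemma fin_gen_kernel:
  fixes F :: "('a,'b) module" and M :: "('a,'c) module"
  assumes F: "plain_module R F" and M: "plain_module R M" and \<phi>: "linear_map R F M \<phi>"
    and surj: "\<And>y. y \<in> carrier M \<Longrightarrow> \<exists>x\<in>carrier F. \<phi> x = y"
    and fin_gen_F: "fin_gen R F (carrier F)" and fin_pres_M: "fin_pres R M"
  shows "fin_gen R F {x \<in> carrier F. \<phi> x = \<zero>\<^bsub>M\<^esub>}"
proof -
  interpret F: plain_module R F by fact
  interpret M: plain_module R M by fact
  have Fr: "plain_module R (free_module R n)" for n by (rule plain_module_free_module[OF F.is_cring])
  define K where "K = {x \<in> carrier F. \<phi> x = \<zero>\<^bsub>M\<^esub>}"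
  have K: "submodule K R F" unfolding K_def by (rule linear_map_kernel_submodule[OF F M \<phi>])
  obtain n g where g: "g \<in> {..<n} \<rightarrow> carrier M" "carrier M = span_gens R M n g"
    and rel: "fin_gen R (free_module R n) (relations R M n g)"
    using fin_pres_M unfolding fin_pres_def by blast
  obtain \<psi> where \<psi>: "linear_map R (free_module R n) F \<psi>"
    and \<phi>_\<psi>: "\<And>c. c \<in> carrier (free_module R n) \<Longrightarrow> \<phi> (\<psi> c) = lin_comb M n c g"
    using linear_map_lift_free[OF F M \<phi> surj g(1)] by blast
  obtain m e where e: "e \<in> {..<m} \<rightarrow> carrier F" "carrier F = span_gens R F m e"
    using fin_gen_F unfolding fin_gen_def by blast
  have "(\<lambda>j. \<phi> (e j)) \<in> {..<m} \<rightarrow> span_gens R M n g" using e(1) g(2) linear_map_closed[OF \<phi>] by auto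
  then obtain w where w_closed: "w \<in> {..<m} \<rightarrow> carrier (free_module R n)"
    and w: "\<And>j. j < m \<Longrightarrow> lin_comb M n (w j) g = \<phi> (e j)"
    using M.span_gens_free_coeffs_family[OF _ g(1)] by metis
  note kernel = F M \<phi> \<psi> \<phi>_\<psi> e(1) w_closed w
  let ?corr = "\<lambda>j. e j \<ominus>\<^bsub>F\<^esub> \<psi> (w j)"
  have rel_sub: "relations R M n g \<subseteq> carrier (free_module R n)" unfolding relations_def by auto
  show ?thesis unfolding K_def[symmetric]
  proof (rule F.fin_gen_add[OF fin_gen_image[OF Fr F \<psi> rel rel_sub] _
        F.fin_gen_span_gens[OF kernel_corrections_closed[OF kernel]] _ K])
    show "\<psi> ` relations R M n g \<subseteq> K"
      using rel_sub \<phi>_\<psi> linear_map_closed[OF \<psi>] by (auto simp: K_def relations_def)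
    show "span_gens R F m ?corr \<subseteq> K"
      using F.span_gens_least[OF K] kernel_corrections_in_kernel[OF kernel] by (simp add: K_def)
  next
    fix x assume x: "x \<in> K"
    then obtain c where c: "c \<in> {..<m} \<rightarrow> carrier R" "x = lin_comb F m c e"
      using e(2) unfolding K_def span_gens_def by blast
    then have "\<phi> (lin_comb F m c e) = \<zero>\<^bsub>M\<^esub>" using x unfolding K_def by simp
    note decomposition = kernel_decomposition[OF kernel c(1) this]
    have "lin_comb F m c ?corr \<in> span_gens R F m ?corr" using c(1) unfolding span_gens_def by blast
    then show "\<exists>y\<in>\<psi> ` relations R M n g. \<exists>z\<in>span_gens R F m ?corr. x = y \<oplus>\<^bsub>F\<^esub> z"
      using decomposition c(2) by blast
  qed
qed

lemma fin_gen_relations: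
  assumes M: "plain_module R M" and "fin_pres R M"
    and g: "g \<in> {..<n} \<rightarrow> carrier M" "carrier M = span_gens R M n g"
  shows "fin_gen R (free_module R n) (relations R M n g)"
proof -
  interpret M: plain_module R M by fact
  have "fin_gen R (free_module R n) {c \<in> carrier (free_module R n). lin_comb M n c g = \<zero>\<^bsub>M\<^esub>}"
  proof (rule fin_gen_kernel[OF plain_module_free_module[OF M.is_cring] M linear_map_lin_comb_gens[OF M g(1)]])
    show "\<exists>c\<in>carrier (free_module R n). lin_comb M n c g = y" if "y \<in> carrier M" for y
      using M.span_gens_free_coeffs[OF _ g(1)] that g(2) by (metis free_module_simps(1))
  qed (use fin_gen_free_module[OF M.is_cring] assms(2) in auto)
  then show ?thesis unfolding relations_def by simp
qed

lemma fin_gen_extension: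
  assumes M: "plain_module R M" and N: "plain_module R N" and \<pi>: "linear_map R M N \<pi>"
    and U: "submodule U R M"
    and image: "fin_gen R N (\<pi> ` U)" and kernel: "fin_gen R M {x \<in> U. \<pi> x = \<zero>\<^bsub>N\<^esub>}"
  shows "fin_gen R M U"
proof -
  interpret M: plain_module R M by fact
  interpret N: plain_module R N by fact
  have U_sub: "U \<subseteq> carrier M" using M.submoduleE(1)[OF U] .
  have \<pi>_U: "\<pi> ` U \<subseteq> carrier N" using U_sub linear_map_closed[OF \<pi>] by auto
  obtain m h where h: "h \<in> {..<m} \<rightarrow> \<pi> ` U" "\<pi> ` U = span_gens R N m h"
    using N.fin_genE[OF image \<pi>_U] .
  have "\<exists>x. x \<in> U \<and> \<pi> x = h j" if "j < m" for j
  proof -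
    have "h j \<in> \<pi> ` U" using h(1) that by (simp add: Pi_iff)
    then show ?thesis by (auto simp: image_iff)
  qed
  then obtain y where y: "\<And>j. j < m \<Longrightarrow> y j \<in> U \<and> \<pi> (y j) = h j"
    using choice_lessThan[of m "\<lambda>j x. x \<in> U \<and> \<pi> x = h j"] by blast
  have y_U: "y \<in> {..<m} \<rightarrow> U" and y_closed: "y \<in> {..<m} \<rightarrow> carrier M" using y U_sub by auto
  show ?thesis
  proof (rule M.fin_gen_add[OF kernel _ M.fin_gen_span_gens[OF y_closed] M.span_gens_least[OF U y_U] U])
    fix x assume x: "x \<in> U"
    obtain c where c: "c \<in> {..<m} \<rightarrow> carrier R" "\<pi> x = lin_comb N m c h"
      using x h(2) unfolding span_gens_def by blast
    define v where "v = lin_comb M m c y"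
    have v: "v \<in> span_gens R M m y" unfolding v_def span_gens_def using c(1) by blast
    have vU: "v \<in> U" using v M.span_gens_least[OF U y_U] by blast
    have x_closed: "x \<in> carrier M" and v_closed: "v \<in> carrier M" using x vU U_sub by auto
    have "\<pi> v = lin_comb N m c (\<lambda>j. \<pi> (y j))"
      unfolding v_def by (rule linear_map_lin_comb[OF M N \<pi> c(1) y_closed])
    also have "\<dots> = \<pi> x"
      unfolding c(2) using c(1) y y_closed linear_map_closed[OF \<pi>] by (intro N.lin_comb_cong) auto
    finally have "\<pi> (x \<ominus>\<^bsub>M\<^esub> v) = \<zero>\<^bsub>N\<^esub>"
      using linear_map_diff[OF M N \<pi> x_closed v_closed] linear_map_closed[OF \<pi> x_closed]
      by (simp add: N.r_neg a_minus_def)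
    moreover have "x \<ominus>\<^bsub>M\<^esub> v \<in> U"
      unfolding a_minus_def using x vU M.submoduleE(3,5)[OF U] by blast
    moreover have "x = (x \<ominus>\<^bsub>M\<^esub> v) \<oplus>\<^bsub>M\<^esub> v"
      using x_closed v_closed by (simp add: a_minus_def M.a_assoc M.l_neg)
    ultimately show "\<exists>u\<in>{x \<in> U. \<pi> x = \<zero>\<^bsub>N\<^esub>}. \<exists>v\<in>span_gens R M m y. x = u \<oplus>\<^bsub>M\<^esub> v"
      using v by blast
  qed auto
qed

definition vec_append :: "nat \<Rightarrow> nat \<Rightarrow> (nat \<Rightarrow> 'a) \<Rightarrow> (nat \<Rightarrow> 'a) \<Rightarrow> nat \<Rightarrow> 'a" where
  "vec_append n q u v = (\<lambda>k\<in>{..<n+q}. if k < n then u k else v (k - n))"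

definition vec_drop :: "nat \<Rightarrow> nat \<Rightarrow> (nat \<Rightarrow> 'a) \<Rightarrow> nat \<Rightarrow> 'a" where
  "vec_drop n q r = (\<lambda>i\<in>{..<q}. r (n + i))"

lemma vec_append_closed:
  "u \<in> carrier (free_module R n) \<Longrightarrow> v \<in> carrier (free_module R q) \<Longrightarrow>
   vec_append n q u v \<in> carrier (free_module R (n+q))"
  unfolding vec_append_def by (auto simp: PiE_iff)

lemma vec_drop_append: "v \<in> carrier (free_module R q) \<Longrightarrow> vec_drop n q (vec_append n q u v) = v"
  unfolding vec_drop_def vec_append_def by (auto simp: fun_eq_iff PiE_iff extensional_def)

lemma vec_take_closed:
  "r \<in> carrier (free_module R (n+q)) \<Longrightarrow> restrict r {..<n} \<in> carrier (free_module R n)"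
  by (auto simp: PiE_iff)

lemma vec_append_split:
  "r \<in> carrier (free_module R (n+q)) \<Longrightarrow> r = vec_append n q (restrict r {..<n}) (vec_drop n q r)"
  unfolding vec_append_def vec_drop_def by (auto simp: fun_eq_iff PiE_iff extensional_def)

lemma linear_map_vec_drop: "linear_map R (free_module R (n+q)) (free_module R q) (vec_drop n q)"
  unfolding linear_map_def
proof (intro conjI ballI)
  show "vec_drop n q \<in> carrier (free_module R (n+q)) \<rightarrow> carrier (free_module R q)"
    unfolding vec_drop_def by (auto simp: PiE_iff)
  show "vec_drop n q (x \<oplus>\<^bsub>free_module R (n+q)\<^esub> y)
      = vec_drop n q x \<oplus>\<^bsub>free_module R q\<^esub> vec_drop n q y" for x y
    unfolding vec_drop_def by (rule ext) simp
  show "vec_drop n q (a \<odot>\<^bsub>free_module R (n+q)\<^esub> x) = a \<odot>\<^bsub>free_module R q\<^esub> vec_drop n q x" for a x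
    unfolding vec_drop_def by (rule ext) simp
qed

lemma linear_map_vec_append_zero:
  assumes "cring R"
  shows "linear_map R (free_module R n) (free_module R (n+q))
           (\<lambda>u. vec_append n q u \<zero>\<^bsub>free_module R q\<^esub>)"
  unfolding linear_map_def
proof (intro conjI ballI)
  interpret R: cring R by fact
  show "(\<lambda>u. vec_append n q u \<zero>\<^bsub>free_module R q\<^esub>) \<in> carrier (free_module R n) \<rightarrow> carrier (free_module R (n+q))"
    using vec_append_closed[of _ R n "\<zero>\<^bsub>free_module R q\<^esub>" q] by auto
  show "vec_append n q (x \<oplus>\<^bsub>free_module R n\<^esub> y) \<zero>\<^bsub>free_module R q\<^esub>
      = vec_append n q x \<zero>\<^bsub>free_module R q\<^esub> \<oplus>\<^bsub>free_module R (n+q)\<^esub> vec_append n q y \<zero>\<^bsub>free_module R q\<^esub>"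
    for x y
    unfolding vec_append_def by (rule ext) auto
  show "vec_append n q (a \<odot>\<^bsub>free_module R n\<^esub> x) \<zero>\<^bsub>free_module R q\<^esub>
      = a \<odot>\<^bsub>free_module R (n+q)\<^esub> vec_append n q x \<zero>\<^bsub>free_module R q\<^esub>"
    if "a \<in> carrier R" for a x
    unfolding vec_append_def using that by (intro ext) auto
qed

lemma (in plain_module) lin_comb_vec_append:
  assumes "u \<in> carrier (free_module R n)" "v \<in> carrier (free_module R q)"
    "g \<in> {..<n} \<rightarrow> carrier M" "h \<in> {..<q} \<rightarrow> carrier M"
  shows "lin_comb M (n+q) (vec_append n q u v) (\<lambda>k. if k < n then g k else h (k - n))
       = lin_comb M n u g \<oplus>\<^bsub>M\<^esub> lin_comb M q v h"
proof -
  let ?G = "\<lambda>k. if k < n then g k else h (k - n)"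
  have C: "vec_append n q u v \<in> {..<n+q} \<rightarrow> carrier R" using vec_append_closed[OF assms(1,2)] by auto
  have G: "?G \<in> {..<n+q} \<rightarrow> carrier M" using assms by (auto simp: Pi_iff)
  have "lin_comb M (n+q) (vec_append n q u v) ?G
      = lin_comb M n (vec_append n q u v) ?G \<oplus>\<^bsub>M\<^esub>
        lin_comb M q (\<lambda>i. vec_append n q u v (n+i)) (\<lambda>i. ?G (n+i))"
    by (rule lin_comb_append[OF C G])
  also have "lin_comb M n (vec_append n q u v) ?G = lin_comb M n u g"
    using assms C by (intro lin_comb_cong) (auto simp: vec_append_def)
  also have "lin_comb M q (\<lambda>i. vec_append n q u v (n+i)) (\<lambda>i. ?G (n+i)) = lin_comb M q v h"
    using assms C by (intro lin_comb_cong) (auto simp: vec_append_def)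
  finally show ?thesis .
qed

(*
  Setting for an exact sequence 0 \<rightarrow> N \<rightarrow> M \<rightarrow> Q \<rightarrow> 0: g generates N and h' lifts generators h of Q.
  The family g followed by h' generates M; its relations project (vec_drop) onto the relations
  of h, and those projecting to zero are the relations of g padded with zeros.
*)
context
  fixes R :: "('a,'r) ring_scheme" and M :: "('a,'b) module" and Q :: "('a,'c) module"
    and \<phi> N and n q :: nat and g h h'
  assumes M: "plain_module R M" and Q: "plain_module R Q" and \<phi>: "linear_map R M Q \<phi>"
    and kernel: "\<And>x. x \<in> carrier M \<Longrightarrow> \<phi> x = \<zero>\<^bsub>Q\<^esub> \<longleftrightarrow> x \<in> N"
    and g: "g \<in> {..<n} \<rightarrow> carrier M" and N: "N = span_gens R M n g"
    and h: "h \<in> {..<q} \<rightarrow> carrier Q" "carrier Q = span_gens R Q q h"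
    and h': "h' \<in> {..<q} \<rightarrow> carrier M" and lift: "\<And>j. j < q \<Longrightarrow> \<phi> (h' j) = h j"
begin

interpretation M: plain_module R M by (rule M)
interpretation Q: plain_module R Q by (rule Q)

private abbreviation gens where "gens \<equiv> \<lambda>k. if k < n then g k else h' (k - n)"

lemma lin_comb_lift:
  assumes "v \<in> {..<q} \<rightarrow> carrier R"
  shows "\<phi> (lin_comb M q v h') = lin_comb Q q v h"
proof -
  have "\<phi> (lin_comb M q v h') = lin_comb Q q v (\<lambda>j. \<phi> (h' j))"
    by (rule linear_map_lin_comb[OF M Q \<phi> assms h'])
  also have "\<dots> = lin_comb Q q v h"
    using assms h' lift linear_map_closed[OF \<phi>] by (intro Q.lin_comb_cong) auto
  finally show ?thesis .
qed

lemma lin_comb_lift_in_kernel_iff: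
  assumes "v \<in> {..<q} \<rightarrow> carrier R"
  shows "lin_comb M q v h' \<in> N \<longleftrightarrow> lin_comb Q q v h = \<zero>\<^bsub>Q\<^esub>"
  using kernel[OF M.lin_comb_closed[OF assms h']] lin_comb_lift[OF assms] by simp

lemma carrier_eq_span_gens_extension: "carrier M = span_gens R M (n+q) gens"
proof
  show "span_gens R M (n+q) gens \<subseteq> carrier M"
    using g h' by (intro M.span_gens_subset_carrier) (auto simp: Pi_iff)
next
  show "carrier M \<subseteq> span_gens R M (n+q) gens"
  proof
    fix x assume x: "x \<in> carrier M"
    obtain v where v: "v \<in> {..<q} \<rightarrow> carrier R" "\<phi> x = lin_comb Q q v h"
      using linear_map_closed[OF \<phi> x] h(2) unfolding span_gens_def by blast
    define y where "y = lin_comb M q v h'"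
    have y: "y \<in> carrier M" "y \<in> span_gens R M q h'"
      unfolding y_def span_gens_def using v(1) h' by (auto intro: M.lin_comb_closed)
    have "\<phi> (x \<ominus>\<^bsub>M\<^esub> y) = \<zero>\<^bsub>Q\<^esub>"
      using linear_map_diff[OF M Q \<phi> x y(1)] lin_comb_lift[OF v(1)] v(2) Q.lin_comb_closed[OF v(1) h(1)]
      by (simp add: y_def a_minus_def Q.r_neg)
    then have "x \<ominus>\<^bsub>M\<^esub> y \<in> span_gens R M n g"
      using kernel x y(1) N by simp
    then have "(x \<ominus>\<^bsub>M\<^esub> y) \<oplus>\<^bsub>M\<^esub> y \<in> span_gens R M (n+q) gens"
      using M.span_gens_append[OF _ y(2) g h'] by simp
    moreover have "(x \<ominus>\<^bsub>M\<^esub> y) \<oplus>\<^bsub>M\<^esub> y = x"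
      using x y(1) by (simp add: a_minus_def M.a_assoc M.l_neg)
    ultimately show "x \<in> span_gens R M (n+q) gens" by simp
  qed
qed

lemma lin_comb_gens_extension:
  assumes "r \<in> carrier (free_module R (n+q))"
  shows "lin_comb M (n+q) r gens
       = lin_comb M n (restrict r {..<n}) g \<oplus>\<^bsub>M\<^esub> lin_comb M q (vec_drop n q r) h'"
proof -
  have "restrict r {..<n} \<in> carrier (free_module R n)" "vec_drop n q r \<in> carrier (free_module R q)"
    using assms by (auto simp: vec_drop_def PiE_iff)
  from M.lin_comb_vec_append[OF this g h'] show ?thesis
    by (subst (1) vec_append_split[OF assms])
qed

lemma vec_drop_relations_extension:
  assumes "r \<in> relations R M (n+q) gens"
  shows "vec_drop n q r \<in> relations R Q q h"
proof -
  define v where "v = vec_drop n q r"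
  from assms have r: "r \<in> carrier (free_module R (n+q))" "lin_comb M (n+q) r gens = \<zero>\<^bsub>M\<^esub>"
    unfolding relations_def by auto
  let ?u = "restrict r {..<n}"
  have u: "?u \<in> {..<n} \<rightarrow> carrier R" using vec_take_closed[OF r(1)] by (simp add: PiE_def)
  have v_closed: "v \<in> carrier (free_module R q)"
    unfolding v_def by (rule linear_map_closed[OF linear_map_vec_drop r(1)])
  have lu: "lin_comb M n ?u g \<in> N" unfolding N span_gens_def using u by blast
  have lu_closed: "lin_comb M n ?u g \<in> carrier M" using u g by (rule M.lin_comb_closed)
  have lv_closed: "lin_comb M q v h' \<in> carrier M" using v_closed h' by (intro M.lin_comb_closed) auto
  have sum: "lin_comb M n ?u g \<oplus>\<^bsub>M\<^esub> lin_comb M q v h' = \<zero>\<^bsub>M\<^esub>"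
    using r lin_comb_gens_extension[OF r(1)] v_def by simp
  have \<phi>_u: "\<phi> (lin_comb M n ?u g) = \<zero>\<^bsub>Q\<^esub>" using kernel[OF lu_closed] lu by simp
  have "\<phi> (lin_comb M q v h') = \<phi> (lin_comb M n ?u g) \<oplus>\<^bsub>Q\<^esub> \<phi> (lin_comb M q v h')"
    unfolding \<phi>_u using linear_map_closed[OF \<phi> lv_closed] by (rule Q.l_zero[symmetric])
  also have "\<dots> = \<phi> \<zero>\<^bsub>M\<^esub>" unfolding sum[symmetric] by (rule linear_map_add[OF \<phi> lu_closed lv_closed, symmetric])
  also have "\<dots> = \<zero>\<^bsub>Q\<^esub>" by (rule linear_map_zero[OF M Q \<phi>])
  finally have "lin_comb Q q v h = \<zero>\<^bsub>Q\<^esub>"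
    using lin_comb_lift[of v] v_closed by (simp add: PiE_def)
  then show ?thesis unfolding relations_def using v_closed v_def by simp
qed

lemma relations_extension_lift:
  assumes "v \<in> relations R Q q h"
  shows "\<exists>r\<in>relations R M (n+q) gens. vec_drop n q r = v"
proof -
  from assms have v: "v \<in> carrier (free_module R q)" "lin_comb Q q v h = \<zero>\<^bsub>Q\<^esub>"
    unfolding relations_def by auto
  have v': "v \<in> {..<q} \<rightarrow> carrier R" using v(1) by auto
  have lv_closed: "lin_comb M q v h' \<in> carrier M" using v' h' by (rule M.lin_comb_closed)
  have "\<ominus>\<^bsub>M\<^esub> lin_comb M q v h' \<in> span_gens R M n g"
    using lin_comb_lift_in_kernel_iff[OF v'] v(2) M.submoduleE(3)[OF M.span_gens_submodule[OF g]] N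
    by simp
  then obtain u where u: "u \<in> carrier (free_module R n)" "lin_comb M n u g = \<ominus>\<^bsub>M\<^esub> lin_comb M q v h'"
    using M.span_gens_free_coeffs[OF _ g] by (metis free_module_simps(1))
  define r where "r = vec_append n q u v"
  have r: "r \<in> carrier (free_module R (n+q))" unfolding r_def by (rule vec_append_closed[OF u(1) v(1)])
  have "lin_comb M (n+q) r gens = \<ominus>\<^bsub>M\<^esub> lin_comb M q v h' \<oplus>\<^bsub>M\<^esub> lin_comb M q v h'"
    unfolding r_def M.lin_comb_vec_append[OF u(1) v(1) g h'] u(2) ..
  also have "\<dots> = \<zero>\<^bsub>M\<^esub>" using lv_closed by (rule M.l_neg)
  finally have "r \<in> relations R M (n+q) gens" unfolding relations_def using r by simp
  moreover have "vec_drop n q r = v" unfolding r_def by (rule vec_drop_append[OF v(1)])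
  ultimately show ?thesis by blast
qed

lemma image_vec_drop_relations_extension:
  "vec_drop n q ` relations R M (n+q) gens = relations R Q q h"
  using vec_drop_relations_extension relations_extension_lift by blast

lemma relations_extension_kernel:
  "{r \<in> relations R M (n+q) gens. vec_drop n q r = \<zero>\<^bsub>free_module R q\<^esub>}
   = (\<lambda>u. vec_append n q u \<zero>\<^bsub>free_module R q\<^esub>) ` relations R M n g"
proof -
  interpret Fr: plain_module R "free_module R q" by (rule plain_module_free_module[OF M.is_cring])
  have zero_lc: "lin_comb M q \<zero>\<^bsub>free_module R q\<^esub> h' = \<zero>\<^bsub>M\<^esub>"
    by (rule linear_map_zero[OF Fr.plain_module_axioms M linear_map_lin_comb_gens[OF M h']])
  have zero: "\<zero>\<^bsub>free_module R q\<^esub> \<in> carrier (free_module R q)" by (rule Fr.zero_closed)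
  have lc: "lin_comb M (n+q) (vec_append n q u \<zero>\<^bsub>free_module R q\<^esub>) gens = lin_comb M n u g"
    if "u \<in> carrier (free_module R n)" for u
  proof -
    have "lin_comb M n u g \<in> carrier M" using that g by (intro M.lin_comb_closed) auto
    then show ?thesis
      using M.lin_comb_vec_append[OF that zero g h'] by (simp del: free_module_simps add: zero_lc)
  qed
  show ?thesis
  proof (intro equalityI subsetI)
    fix r assume "r \<in> {r \<in> relations R M (n+q) gens. vec_drop n q r = \<zero>\<^bsub>free_module R q\<^esub>}"
    then have r: "r \<in> carrier (free_module R (n+q))" "lin_comb M (n+q) r gens = \<zero>\<^bsub>M\<^esub>"
      and drop: "vec_drop n q r = \<zero>\<^bsub>free_module R q\<^esub>" unfolding relations_def by auto
    let ?u = "restrict r {..<n}"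
    have u: "?u \<in> carrier (free_module R n)" by (rule vec_take_closed[OF r(1)])
    have r_eq: "r = vec_append n q ?u \<zero>\<^bsub>free_module R q\<^esub>"
      using vec_append_split[OF r(1)] drop by simp
    have "?u \<in> relations R M n g" using r(2) lc[OF u] u r_eq unfolding relations_def by simp
    with r_eq show "r \<in> (\<lambda>u. vec_append n q u \<zero>\<^bsub>free_module R q\<^esub>) ` relations R M n g" by blast
  next
    fix r assume "r \<in> (\<lambda>u. vec_append n q u \<zero>\<^bsub>free_module R q\<^esub>) ` relations R M n g"
    then obtain u where u: "u \<in> carrier (free_module R n)" "lin_comb M n u g = \<zero>\<^bsub>M\<^esub>"
      and r: "r = vec_append n q u \<zero>\<^bsub>free_module R q\<^esub>" unfolding relations_def by auto
    have "r \<in> relations R M (n+q) gens"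
      unfolding relations_def r using vec_append_closed[OF u(1) zero] lc[OF u(1)] u(2) by simp
    moreover have "vec_drop n q r = \<zero>\<^bsub>free_module R q\<^esub>" unfolding r by (rule vec_drop_append[OF zero])
    ultimately show "r \<in> {r \<in> relations R M (n+q) gens. vec_drop n q r = \<zero>\<^bsub>free_module R q\<^esub>}" by blast
  qed
qed

end

lemma fin_pres_extension:
  fixes M :: "('a,'b) module" and Q :: "('a,'c) module"
  assumes M: "plain_module R M" and Q: "plain_module R Q" and N: "submodule N R M"
    and fin_pres_N: "fin_pres R (M\<lparr>carrier := N\<rparr>)" and \<phi>: "linear_map R M Q \<phi>"
    and surj: "\<And>y. y \<in> carrier Q \<Longrightarrow> \<exists>x\<in>carrier M. \<phi> x = y"
    and kernel: "\<And>x. x \<in> carrier M \<Longrightarrow> \<phi> x = \<zero>\<^bsub>Q\<^esub> \<longleftrightarrow> x \<in> N"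
    and fin_pres_Q: "fin_pres R Q"
  shows "fin_pres R M"
proof -
  interpret M: plain_module R M by fact
  have Fr: "plain_module R (free_module R k)" for k by (rule plain_module_free_module[OF M.is_cring])
  obtain n g where g: "g \<in> {..<n} \<rightarrow> N" "N = span_gens R M n g"
    and rel_g: "fin_gen R (free_module R n) (relations R M n g)"
    using fin_pres_N fin_pres_restrict_iff[OF M N] by blast
  have g_closed: "g \<in> {..<n} \<rightarrow> carrier M" using g(1) M.submoduleE(1)[OF N] by auto
  obtain q h where h: "h \<in> {..<q} \<rightarrow> carrier Q" "carrier Q = span_gens R Q q h"
    and rel_h: "fin_gen R (free_module R q) (relations R Q q h)"
    using fin_pres_Q unfolding fin_pres_def by blast
  obtain h' where h': "\<And>j. j < q \<Longrightarrow> h' j \<in> carrier M \<and> \<phi> (h' j) = h j"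
    using choice_lessThan[of q "\<lambda>j x. x \<in> carrier M \<and> \<phi> x = h j"] surj h(1) by blast
  have h'_closed: "h' \<in> {..<q} \<rightarrow> carrier M" using h' by auto
  note extension = M Q \<phi> kernel g_closed g(2) h h'_closed
  let ?G = "\<lambda>k. if k < n then g k else h' (k - n)"
  have "fin_gen R (free_module R (n+q)) (relations R M (n+q) ?G)"
  proof (rule fin_gen_extension[OF Fr Fr linear_map_vec_drop relations_submodule[OF M]])
    show "?G \<in> {..<n+q} \<rightarrow> carrier M" using g_closed h'_closed by (auto simp: Pi_iff)
    show "fin_gen R (free_module R q) (vec_drop n q ` relations R M (n+q) ?G)"
      using image_vec_drop_relations_extension[OF extension] h' rel_h by simp
    have "relations R M n g \<subseteq> carrier (free_module R n)" unfolding relations_def by auto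
    from fin_gen_image[OF Fr Fr linear_map_vec_append_zero[OF M.is_cring] rel_g this]
    show "fin_gen R (free_module R (n+q))
      {r \<in> relations R M (n+q) ?G. vec_drop n q r = \<zero>\<^bsub>free_module R q\<^esub>}"
      using relations_extension_kernel[OF extension] h' by simp
  qed
  moreover have "carrier M = span_gens R M (n+q) ?G"
    using carrier_eq_span_gens_extension[OF extension] h' by simp
  moreover have "?G \<in> {..<n+q} \<rightarrow> carrier M" using g_closed h'_closed by (auto simp: Pi_iff)
  ultimately show ?thesis unfolding fin_pres_def by blast
qed

section \<open>Finite ring extensions\<close>

lemma linear_map_smult_right:
  assumes "plain_module S M" "x \<in> carrier M" "h \<in> ring_hom A S"
  shows "linear_map A (restrict_scalars h (ring_module S)) (restrict_scalars h M) (\<lambda>s. s \<odot>\<^bsub>M\<^esub> x)"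
proof -
  interpret M: plain_module S M by fact
  show ?thesis
    unfolding linear_map_def using assms(2) ring_hom_closed[OF assms(3)]
    by (auto simp: M.smult_l_distr M.smult_assoc1)
qed

lemma fin_gen_restrict_scalars:
  fixes M :: "('b,'c) module" and S :: "('b,'n) ring_scheme" and A :: "('a,'k) ring_scheme"
  assumes M: "plain_module S M" and A: "cring A" and h: "h \<in> ring_hom A S"
    and fin_gen_M: "fin_gen S M (carrier M)"
    and fin_gen_S: "fin_gen A (restrict_scalars h (ring_module S)) (carrier S)"
  shows "fin_gen A (restrict_scalars h M) (carrier M)"
proof -
  interpret M: plain_module S M by fact
  have MA: "plain_module A (restrict_scalars h M)" by (rule plain_module_restrict_scalars[OF M A h])
  interpret MA: plain_module A "restrict_scalars h M" by (rule MA)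
  have SA: "plain_module A (restrict_scalars h (ring_module S))"
    by (rule plain_module_restrict_scalars[OF plain_module_ring_module[OF M.is_cring] A h])
  obtain n m where m: "m \<in> {..<n} \<rightarrow> carrier M" "carrier M = span_gens S M n m"
    using fin_gen_M unfolding fin_gen_def by blast
  have "fin_gen A (restrict_scalars h M) (span_gens S M k m)" if "k \<le> n" for k
    using that
  proof (induction k)
    case 0
    have "span_gens S M 0 m = span_gens A (restrict_scalars h M) 0 m"
      by (simp add: span_gens_def lin_comb_def)
    then show ?case using MA.fin_gen_span_gens[of m 0] by simp
  next
    case (Suc k)
    have m_Suc: "m \<in> {..<Suc k} \<rightarrow> carrier M" and m_k: "m \<in> {..<k} \<rightarrow> carrier M"
      and mk: "m k \<in> carrier M" using m(1) Suc.prems by auto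
    let ?N = "span_gens S M (Suc k) m"
    have N: "submodule ?N S M" by (rule M.span_gens_submodule[OF m_Suc])
    have mN: "m i \<in> ?N" if "i \<le> k" for i using M.span_gens_gen[OF _ m_Suc] that by simp
    show ?case
    proof (rule MA.fin_gen_add[OF Suc.IH[OF Suc_leD[OF Suc.prems]] _
          fin_gen_image[OF SA MA linear_map_smult_right[OF M mk h] fin_gen_S]])
      show "span_gens S M k m \<subseteq> ?N" using mN by (intro M.span_gens_least[OF N]) auto
      show "(\<lambda>s. s \<odot>\<^bsub>M\<^esub> m k) ` carrier S \<subseteq> ?N" using mN[of k] M.submoduleE(4)[OF N] by auto
      show "submodule ?N A (restrict_scalars h M)" by (rule submodule_restrict_scalars[OF M A h N])
    next
      fix x assume "x \<in> ?N"
      then obtain c where c: "c \<in> {..<Suc k} \<rightarrow> carrier S" "x = lin_comb M (Suc k) c m"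
        unfolding span_gens_def by blast
      have "x = lin_comb M k c m \<oplus>\<^bsub>M\<^esub> c k \<odot>\<^bsub>M\<^esub> m k" using M.lin_comb_Suc[OF c(1) m_Suc] c(2) by simp
      moreover have "c \<in> {..<k} \<rightarrow> carrier S" using c(1) by auto
      then have "lin_comb M k c m \<in> span_gens S M k m" unfolding span_gens_def by blast
      moreover have "c k \<odot>\<^bsub>M\<^esub> m k \<in> (\<lambda>s. s \<odot>\<^bsub>M\<^esub> m k) ` carrier S" using c(1) by auto
      ultimately show "\<exists>y\<in>span_gens S M k m. \<exists>z\<in>(\<lambda>s. s \<odot>\<^bsub>M\<^esub> m k) ` carrier S.
          x = y \<oplus>\<^bsub>restrict_scalars h M\<^esub> z" unfolding restrict_scalars_simps by blast
    qed (simp)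
  qed
  from this[of n] show ?thesis using m(2) by simp
qed

lemma fin_gen_of_restrict_scalars:
  assumes M: "plain_module S M" and h: "h \<in> ring_hom A S" and N: "submodule N S M"
    and fin_gen_N: "fin_gen A (restrict_scalars h M) N"
  shows "fin_gen S M N"
proof -
  interpret M: plain_module S M by fact
  obtain n g where g: "g \<in> {..<n} \<rightarrow> N" "N = span_gens A (restrict_scalars h M) n g"
    using fin_gen_N unfolding fin_gen_def by blast
  show ?thesis
    using g span_gens_restrict_scalars_subset[OF h, of M n g] by (intro M.fin_genI[OF N g(1)]) simp
qed

lemma fin_pres_descent:
  fixes M :: "('b,'c) module" and S :: "('b,'n) ring_scheme" and A :: "('a,'k) ring_scheme"
  assumes M: "plain_module S M" and A: "cring A" and h: "h \<in> ring_hom A S"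
    and fin_gen_M: "fin_gen S M (carrier M)"
    and fin_gen_S: "fin_gen A (restrict_scalars h (ring_module S)) (carrier S)"
    and fin_pres_M: "fin_pres A (restrict_scalars h M)"
  shows "fin_pres S M"
proof -
  interpret M: plain_module S M by fact
  obtain n u where u: "u \<in> {..<n} \<rightarrow> carrier M" "carrier M = span_gens S M n u"
    using fin_gen_M unfolding fin_gen_def by blast
  have F: "plain_module S (free_module S n)" by (rule plain_module_free_module[OF M.is_cring])
  have "fin_gen A (restrict_scalars h (free_module S n))
      {c \<in> carrier (restrict_scalars h (free_module S n)). lin_comb M n c u = \<zero>\<^bsub>restrict_scalars h M\<^esub>}"
  proof (rule fin_gen_kernel)
    show "plain_module A (restrict_scalars h (free_module S n))"
      by (rule plain_module_restrict_scalars[OF F A h])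
    show "plain_module A (restrict_scalars h M)" by (rule plain_module_restrict_scalars[OF M A h])
    show "linear_map A (restrict_scalars h (free_module S n)) (restrict_scalars h M) (\<lambda>c. lin_comb M n c u)"
      by (rule linear_map_restrict_scalars[OF linear_map_lin_comb_gens[OF M u(1)] h])
    show "\<exists>c\<in>carrier (restrict_scalars h (free_module S n)). lin_comb M n c u = y"
      if "y \<in> carrier (restrict_scalars h M)" for y
      using M.span_gens_free_coeffs[OF _ u(1)] that u(2) by (metis free_module_simps(1) restrict_scalars_simps(1))
    show "fin_gen A (restrict_scalars h (free_module S n)) (carrier (restrict_scalars h (free_module S n)))"
      using fin_gen_restrict_scalars[OF F A h fin_gen_free_module[OF M.is_cring] fin_gen_S] by simp
  qed (rule fin_pres_M)
  then have "fin_gen A (restrict_scalars h (free_module S n)) (relations S M n u)"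
    unfolding relations_def by simp
  then have "fin_gen S (free_module S n) (relations S M n u)"
    by (rule fin_gen_of_restrict_scalars[OF F h relations_submodule[OF M u(1)]])
  then show ?thesis unfolding fin_pres_def using u by blast
qed

section \<open>Coherent rings and retracts\<close>

definition map_vector :: "('a \<Rightarrow> 'b) \<Rightarrow> nat \<Rightarrow> (nat \<Rightarrow> 'a) \<Rightarrow> nat \<Rightarrow> 'b" where
  "map_vector \<phi> n x = (\<lambda>i\<in>{..<n}. \<phi> (x i))"

lemma map_vector_lin_comb:
  assumes "ring_hom_cring R R' \<phi>" "d \<in> {..<t} \<rightarrow> carrier R" "\<kappa> \<in> {..<t} \<rightarrow> carrier (free_module R n)"
  shows "map_vector \<phi> n (lin_comb (free_module R n) t d \<kappa>)
       = lin_comb (free_module R' n) t (\<lambda>l. \<phi> (d l)) (\<lambda>l. map_vector \<phi> n (\<kappa> l))"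
proof -
  interpret h: ring_hom_cring R R' \<phi> by fact
  interpret F: plain_module R "free_module R n" by (rule plain_module_free_module) unfold_locales
  interpret F': plain_module R' "free_module R' n" by (rule plain_module_free_module) unfold_locales
  show ?thesis
    using assms(2,3)
  proof (induction t)
    case 0
    show ?case by (simp add: map_vector_def fun_eq_iff)
  next
    case (Suc t)
    have prems: "d \<in> {..<t} \<rightarrow> carrier R" "\<kappa> \<in> {..<t} \<rightarrow> carrier (free_module R n)"
      using Suc.prems by auto
    have mapped: "(\<lambda>l. map_vector \<phi> n (\<kappa> l)) \<in> {..<Suc t} \<rightarrow> carrier (free_module R' n)"
      "(\<lambda>l. \<phi> (d l)) \<in> {..<Suc t} \<rightarrow> carrier R'"
      using Suc.prems by (auto simp: map_vector_def PiE_iff Pi_iff)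
    have closed: "lin_comb (free_module R n) t d \<kappa> \<in> carrier (free_module R n)"
      "\<kappa> t \<in> carrier (free_module R n)" "d t \<in> carrier R"
      using F.lin_comb_closed[OF prems] Suc.prems by auto
    have "map_vector \<phi> n (lin_comb (free_module R n) (Suc t) d \<kappa>)
        = map_vector \<phi> n (lin_comb (free_module R n) t d \<kappa>) \<oplus>\<^bsub>free_module R' n\<^esub>
          \<phi> (d t) \<odot>\<^bsub>free_module R' n\<^esub> map_vector \<phi> n (\<kappa> t)"
      unfolding F.lin_comb_Suc[OF Suc.prems] using closed
      by (auto simp: map_vector_def fun_eq_iff PiE_iff Pi_iff)
    also have "\<dots> = lin_comb (free_module R' n) (Suc t) (\<lambda>l. \<phi> (d l)) (\<lambda>l. map_vector \<phi> n (\<kappa> l))"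
      unfolding F'.lin_comb_Suc[OF mapped(2,1)] Suc.IH[OF prems] ..
    finally show ?case .
  qed
qed

lemma map_vector_relations:
  assumes \<phi>: "ring_hom_cring R R' \<phi>" and a: "a \<in> {..<n} \<rightarrow> carrier R"
    and r: "r \<in> relations R (ring_module R) n a"
  shows "map_vector \<phi> n r \<in> relations R' (ring_module R') n (\<lambda>i. \<phi> (a i))"
proof -
  interpret h: ring_hom_cring R R' \<phi> by fact
  interpret M': plain_module R' "ring_module R'" by (rule plain_module_ring_module) unfold_locales
  have r_closed: "r \<in> {..<n} \<rightarrow> carrier R" and r0: "lin_comb (ring_module R) n r a = \<zero>\<^bsub>R\<^esub>"
    using r unfolding relations_def by (auto simp: PiE_def)
  have "lin_comb (ring_module R') n (map_vector \<phi> n r) (\<lambda>i. \<phi> (a i))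
      = lin_comb (ring_module R') n (\<lambda>i. \<phi> (r i)) (\<lambda>i. \<phi> (a i))"
    using r_closed a by (intro M'.lin_comb_cong) (auto simp: map_vector_def)
  also have "\<dots> = \<zero>\<^bsub>R'\<^esub>"
    using ring_hom_lin_comb_ring_module[OF \<phi> r_closed a] r0 by simp
  finally show ?thesis
    unfolding relations_def using r_closed by (auto simp: map_vector_def)
qed

lemma relations_cong:
  assumes "\<And>i. i < n \<Longrightarrow> g i = g' i" "plain_module R M" "g \<in> {..<n} \<rightarrow> carrier M"
  shows "relations R M n g = relations R M n g'"
proof -
  have "lin_comb M n c g = lin_comb M n c g'" if "c \<in> {..<n} \<rightarrow>\<^sub>E carrier R" for c
    using that by (intro plain_module.lin_comb_cong[OF assms(2) _ assms(1) _ assms(3)]) (auto simp: PiE_def)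
  then show ?thesis unfolding relations_def by (intro Collect_cong) auto
qed

lemma coherent_ring_relations:
  assumes R: "cring R" and coherent: "coherent_ring R" and a: "a \<in> {..<n} \<rightarrow> carrier R"
  shows "fin_gen R (free_module R n) (relations R (ring_module R) n a)"
proof -
  interpret M: plain_module R "ring_module R" by (rule plain_module_ring_module[OF R])
  let ?J = "span_gens R (ring_module R) n a"
  have a': "a \<in> {..<n} \<rightarrow> carrier (ring_module R)" using a by simp
  have J: "submodule ?J R (ring_module R)" by (rule M.span_gens_submodule[OF a'])
  have a_J: "a \<in> {..<n} \<rightarrow> ?J" using M.span_gens_gen[OF _ a'] by blast
  have "fin_pres R ((ring_module R)\<lparr>carrier := ?J\<rparr>)"
    using coherent M.fin_gen_span_gens[OF a'] M.span_gens_subset_carrier[OF a']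
    unfolding coherent_ring_def coherent_module_def by blast
  then have "fin_gen R (free_module R n) (relations R ((ring_module R)\<lparr>carrier := ?J\<rparr>) n a)"
    using plain_module_restrict[OF M.plain_module_axioms J] a_J span_gens_restrict[OF _ J a_J]
    by (intro fin_gen_relations) (auto simp: M.plain_module_axioms)
  then show ?thesis using relations_restrict[OF M.plain_module_axioms J a_J] by simp
qed

lemma coherent_ringI:
  assumes R: "cring R"
    and relations: "\<And>n a. a \<in> {..<n} \<rightarrow> carrier R \<Longrightarrow>
      fin_gen R (free_module R n) (relations R (ring_module R) n a)"
  shows "coherent_ring R"
  unfolding coherent_ring_def coherent_module_def
proof (intro conjI allI impI)
  interpret M: plain_module R "ring_module R" by (rule plain_module_ring_module[OF R])
  show "fin_gen R (ring_module R) (carrier (ring_module R))" using fin_gen_ring_module[OF R] by simp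
  fix N assume N: "N \<subseteq> carrier (ring_module R) \<and> fin_gen R (ring_module R) N"
  obtain n a where a: "a \<in> {..<n} \<rightarrow> N" "N = span_gens R (ring_module R) n a"
    "a \<in> {..<n} \<rightarrow> carrier (ring_module R)"
    using M.fin_genE[OF conjunct2[OF N] conjunct1[OF N]] .
  have "N \<subseteq> carrier R" using a(2,3) M.span_gens_subset_carrier by simp
  then show "fin_pres R ((ring_module R)\<lparr>carrier := N\<rparr>)"
    unfolding fin_pres_restrict_iff[OF M.plain_module_axioms M.span_gens_submodule[OF a(3)], folded a(2)]
    using a relations[OF a(3)[simplified]] by blast
qed

lemma map_vector_span_gens:
  assumes \<phi>: "ring_hom_cring R R' \<phi>" and \<kappa>: "\<kappa> \<in> {..<t} \<rightarrow> carrier (free_module R n)"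
  shows "map_vector \<phi> n ` span_gens R (free_module R n) t \<kappa>
    \<subseteq> span_gens R' (free_module R' n) t (\<lambda>l. map_vector \<phi> n (\<kappa> l))"
proof
  fix x assume "x \<in> map_vector \<phi> n ` span_gens R (free_module R n) t \<kappa>"
  then obtain d where d: "d \<in> {..<t} \<rightarrow> carrier R" "x = map_vector \<phi> n (lin_comb (free_module R n) t d \<kappa>)"
    unfolding span_gens_def by blast
  have "(\<lambda>l. \<phi> (d l)) \<in> {..<t} \<rightarrow> carrier R'"
    using d(1) ring_hom_closed[OF ring_hom_cring.homh[OF \<phi>]] by auto
  then show "x \<in> span_gens R' (free_module R' n) t (\<lambda>l. map_vector \<phi> n (\<kappa> l))"
    unfolding d(2) map_vector_lin_comb[OF \<phi> d(1) \<kappa>] span_gens_def by blast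
qed

lemma relations_retract:
  assumes \<iota>: "ring_hom_cring A S \<iota>" and \<pi>: "ring_hom_cring S A \<pi>"
    and retract: "\<And>a. a \<in> carrier A \<Longrightarrow> \<pi> (\<iota> a) = a" and a: "a \<in> {..<n} \<rightarrow> carrier A"
  shows "relations A (ring_module A) n a = map_vector \<pi> n ` relations S (ring_module S) n (\<lambda>i. \<iota> (a i))"
proof (intro equalityI subsetI)
  fix r assume r: "r \<in> relations A (ring_module A) n a"
  then have r_ext: "r \<in> {..<n} \<rightarrow>\<^sub>E carrier A" unfolding relations_def by simp
  have "r = map_vector \<pi> n (map_vector \<iota> n r)"
  proof (rule ext)
    fix i show "r i = map_vector \<pi> n (map_vector \<iota> n r) i"
      using retract[of "r i"] PiE_mem[OF r_ext, of i] PiE_arb[OF r_ext, of i]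
      by (cases "i < n") (simp_all add: map_vector_def)
  qed
  with map_vector_relations[OF \<iota> a r]
  show "r \<in> map_vector \<pi> n ` relations S (ring_module S) n (\<lambda>i. \<iota> (a i))" by blast
next
  fix r assume "r \<in> map_vector \<pi> n ` relations S (ring_module S) n (\<lambda>i. \<iota> (a i))"
  moreover have "(\<lambda>i. \<iota> (a i)) \<in> {..<n} \<rightarrow> carrier S"
    using a ring_hom_closed[OF ring_hom_cring.homh[OF \<iota>]] by auto
  moreover have "relations A (ring_module A) n (\<lambda>i. \<pi> (\<iota> (a i))) = relations A (ring_module A) n a"
    using a retract plain_module_ring_module[OF ring_hom_cring.axioms(1)[OF \<iota>]]
    by (intro relations_cong) (auto simp: Pi_iff)
  ultimately show "r \<in> relations A (ring_module A) n a" using map_vector_relations[OF \<pi>] by auto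
qed

lemma coherent_ring_retract:
  assumes A: "cring A" and S: "cring S"
    and \<iota>: "\<iota> \<in> ring_hom A S" and \<pi>: "\<pi> \<in> ring_hom S A" and retract: "\<And>a. a \<in> carrier A \<Longrightarrow> \<pi> (\<iota> a) = a"
    and coherent: "coherent_ring S"
  shows "coherent_ring A"
proof (rule coherent_ringI[OF A])
  fix n :: nat and a assume a: "a \<in> {..<n} \<rightarrow> carrier A"
  have hom_\<iota>: "ring_hom_cring A S \<iota>" and hom_\<pi>: "ring_hom_cring S A \<pi>"
    using A S \<iota> \<pi> by (simp_all add: ring_hom_cring_def ring_hom_cring_axioms_def)
  have \<iota>a: "(\<lambda>i. \<iota> (a i)) \<in> {..<n} \<rightarrow> carrier S" using a ring_hom_closed[OF \<iota>] by auto
  obtain t :: nat and \<kappa> where \<kappa>: "\<kappa> \<in> {..<t} \<rightarrow> relations S (ring_module S) n (\<lambda>i. \<iota> (a i))"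
    "relations S (ring_module S) n (\<lambda>i. \<iota> (a i)) = span_gens S (free_module S n) t \<kappa>"
    using coherent_ring_relations[OF S coherent \<iota>a] unfolding fin_gen_def by blast
  have \<kappa>_closed: "\<kappa> \<in> {..<t} \<rightarrow> carrier (free_module S n)"
    using \<kappa>(1) unfolding relations_def by auto
  have rel_eq: "relations A (ring_module A) n a
      = map_vector \<pi> n ` relations S (ring_module S) n (\<lambda>i. \<iota> (a i))"
    using relations_retract[OF hom_\<iota> hom_\<pi> _ a] retract by blast
  have "(\<lambda>l. map_vector \<pi> n (\<kappa> l)) \<in> {..<t} \<rightarrow> relations A (ring_module A) n a"
  proof
    fix l assume "l \<in> {..<t}"
    then have "\<kappa> l \<in> relations S (ring_module S) n (\<lambda>i. \<iota> (a i))" using \<kappa>(1) by blast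
    then show "map_vector \<pi> n (\<kappa> l) \<in> relations A (ring_module A) n a" unfolding rel_eq by (rule imageI)
  qed
  moreover have "relations A (ring_module A) n a \<subseteq> span_gens A (free_module A n) t (\<lambda>l. map_vector \<pi> n (\<kappa> l))"
    unfolding rel_eq \<kappa>(2) by (rule map_vector_span_gens[OF hom_\<pi> \<kappa>_closed])
  moreover have "a \<in> {..<n} \<rightarrow> carrier (ring_module A)" using a by simp
  ultimately show "fin_gen A (free_module A n) (relations A (ring_module A) n a)"
    using plain_module.fin_genI[OF plain_module_free_module[OF A]
        relations_submodule[OF plain_module_ring_module[OF A]]]
    by blast
qed

section \<open>The amalgamated algebra\<close>

lemma carrier_amalg: "carrier (amalg A B f b) = amalg_carrier A B f b"
  by (simp add: amalg_def)

lemma amalg_simps [simp]: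
  "x \<oplus>\<^bsub>amalg A B f b\<^esub> y = (fst x \<oplus>\<^bsub>A\<^esub> fst y, snd x \<oplus>\<^bsub>B\<^esub> snd y)"
  "x \<otimes>\<^bsub>amalg A B f b\<^esub> y = (fst x \<otimes>\<^bsub>A\<^esub> fst y, snd x \<otimes>\<^bsub>B\<^esub> snd y)"
  "\<zero>\<^bsub>amalg A B f b\<^esub> = (\<zero>\<^bsub>A\<^esub>, \<zero>\<^bsub>B\<^esub>)"
  "\<one>\<^bsub>amalg A B f b\<^esub> = (\<one>\<^bsub>A\<^esub>, \<one>\<^bsub>B\<^esub>)"
  by (simp_all add: amalg_def RDirProd_def DirProd_def monoid.defs case_prod_beta)

locale amalgamation =
  fixes A :: "('a, 'n) ring_scheme" and B :: "('b, 'm) ring_scheme" and f :: "'a \<Rightarrow> 'b" and b :: "'b set"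
  assumes A: "cring A" and B: "cring B" and f: "f \<in> ring_hom A B" and b: "ideal b B"
begin

abbreviation "S \<equiv> amalg A B f b"

sublocale A: cring A by (rule A)
sublocale B: cring B by (rule B)
sublocale b: ideal b B by (rule b)
sublocale f: ring_hom_cring A B f
  by (simp add: ring_hom_cring_def ring_hom_cring_axioms_def A B f)

lemma ideal_mem_carrier: "y \<in> b \<Longrightarrow> y \<in> carrier B"
  using b.a_subset by auto

lemma amalg_memI: "x \<in> carrier A \<Longrightarrow> y \<in> b \<Longrightarrow> (x, f x \<oplus>\<^bsub>B\<^esub> y) \<in> carrier S"
  by (auto simp: carrier_amalg amalg_carrier_def)

lemma amalg_memE:
  assumes "p \<in> carrier S"
  obtains x y where "p = (x, f x \<oplus>\<^bsub>B\<^esub> y)" "x \<in> carrier A" "y \<in> b"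
  using assms by (auto simp: carrier_amalg amalg_carrier_def)

lemma amalg_mem_closed: "p \<in> carrier S \<Longrightarrow> fst p \<in> carrier A \<and> snd p \<in> carrier B"
  by (auto simp: carrier_amalg amalg_carrier_def ideal_mem_carrier)

lemma amalg_zero_fst_mem: "y \<in> b \<Longrightarrow> (\<zero>\<^bsub>A\<^esub>, y) \<in> carrier S"
  using amalg_memI[of "\<zero>\<^bsub>A\<^esub>" y] ideal_mem_carrier by simp

lemma amalg_add_closed:
  assumes "p \<in> carrier S" "q \<in> carrier S"
  shows "p \<oplus>\<^bsub>S\<^esub> q \<in> carrier S"
proof -
  obtain x1 y1 where 1: "p = (x1, f x1 \<oplus>\<^bsub>B\<^esub> y1)" "x1 \<in> carrier A" "y1 \<in> b"
    using assms(1) by (rule amalg_memE)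
  obtain x2 y2 where 2: "q = (x2, f x2 \<oplus>\<^bsub>B\<^esub> y2)" "x2 \<in> carrier A" "y2 \<in> b"
    using assms(2) by (rule amalg_memE)
  have "f x1 \<oplus>\<^bsub>B\<^esub> y1 \<oplus>\<^bsub>B\<^esub> (f x2 \<oplus>\<^bsub>B\<^esub> y2) = f (x1 \<oplus>\<^bsub>A\<^esub> x2) \<oplus>\<^bsub>B\<^esub> (y1 \<oplus>\<^bsub>B\<^esub> y2)"
    using 1 2 ideal_mem_carrier by (simp add: B.a_ac)
  then show ?thesis
    using 1 2 amalg_memI[of "x1 \<oplus>\<^bsub>A\<^esub> x2" "y1 \<oplus>\<^bsub>B\<^esub> y2"] by simp
qed

lemma amalg_mult_closed:
  assumes "p \<in> carrier S" "q \<in> carrier S"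
  shows "p \<otimes>\<^bsub>S\<^esub> q \<in> carrier S"
proof -
  obtain x1 y1 where 1: "p = (x1, f x1 \<oplus>\<^bsub>B\<^esub> y1)" "x1 \<in> carrier A" "y1 \<in> b"
    using assms(1) by (rule amalg_memE)
  obtain x2 y2 where 2: "q = (x2, f x2 \<oplus>\<^bsub>B\<^esub> y2)" "x2 \<in> carrier A" "y2 \<in> b"
    using assms(2) by (rule amalg_memE)
  let ?y = "f x1 \<otimes>\<^bsub>B\<^esub> y2 \<oplus>\<^bsub>B\<^esub> (y1 \<otimes>\<^bsub>B\<^esub> f x2 \<oplus>\<^bsub>B\<^esub> y1 \<otimes>\<^bsub>B\<^esub> y2)"
  have "(f x1 \<oplus>\<^bsub>B\<^esub> y1) \<otimes>\<^bsub>B\<^esub> (f x2 \<oplus>\<^bsub>B\<^esub> y2) = f (x1 \<otimes>\<^bsub>A\<^esub> x2) \<oplus>\<^bsub>B\<^esub> ?y"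
    using 1 2 ideal_mem_carrier by (simp add: B.l_distr B.r_distr B.a_ac)
  moreover have "?y \<in> b"
    using 1 2 ideal_mem_carrier by (intro b.a_closed b.I_l_closed b.I_r_closed) auto
  ultimately show ?thesis
    using 1 2 amalg_memI[of "x1 \<otimes>\<^bsub>A\<^esub> x2" ?y] by simp
qed

lemma amalg_neg_closed:
  assumes "p \<in> carrier S"
  shows "(\<ominus>\<^bsub>A\<^esub> fst p, \<ominus>\<^bsub>B\<^esub> snd p) \<in> carrier S"
proof -
  obtain x y where p: "p = (x, f x \<oplus>\<^bsub>B\<^esub> y)" "x \<in> carrier A" "y \<in> b"
    using assms by (rule amalg_memE)
  have "\<ominus>\<^bsub>B\<^esub> (f x \<oplus>\<^bsub>B\<^esub> y) = f (\<ominus>\<^bsub>A\<^esub> x) \<oplus>\<^bsub>B\<^esub> \<ominus>\<^bsub>B\<^esub> y"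
    using p ideal_mem_carrier by (simp add: B.minus_add)
  then show ?thesis
    using p amalg_memI[of "\<ominus>\<^bsub>A\<^esub> x" "\<ominus>\<^bsub>B\<^esub> y"] b.a_inv_closed by simp
qed

lemma amalg_diag_mem: "x \<in> carrier A \<Longrightarrow> (x, f x) \<in> carrier S"
  using amalg_memI[of x "\<zero>\<^bsub>B\<^esub>"] b.additive_subgroup_axioms additive_subgroup.zero_closed by force

lemma cring_amalg: "cring S"
proof (rule cringI)
  show "abelian_group S"
  proof (rule abelian_groupI)
    fix x y z assume x: "x \<in> carrier S" and y: "y \<in> carrier S" and z: "z \<in> carrier S"
    note closed = amalg_mem_closed[OF x] amalg_mem_closed[OF y] amalg_mem_closed[OF z]
    show "x \<oplus>\<^bsub>S\<^esub> y \<in> carrier S" using x y by (rule amalg_add_closed)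
    show "x \<oplus>\<^bsub>S\<^esub> y \<oplus>\<^bsub>S\<^esub> z = x \<oplus>\<^bsub>S\<^esub> (y \<oplus>\<^bsub>S\<^esub> z)" using closed by (simp add: A.a_assoc B.a_assoc)
    show "x \<oplus>\<^bsub>S\<^esub> y = y \<oplus>\<^bsub>S\<^esub> x" using closed by (simp add: A.a_comm B.a_comm)
    show "\<zero>\<^bsub>S\<^esub> \<oplus>\<^bsub>S\<^esub> x = x" using closed by simp
    show "\<exists>y\<in>carrier S. y \<oplus>\<^bsub>S\<^esub> x = \<zero>\<^bsub>S\<^esub>"
      using amalg_neg_closed[OF x] closed
      by (intro bexI[of _ "(\<ominus>\<^bsub>A\<^esub> fst x, \<ominus>\<^bsub>B\<^esub> snd x)"]) (auto simp: A.l_neg B.l_neg)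
  next
    show "\<zero>\<^bsub>S\<^esub> \<in> carrier S" using amalg_diag_mem[of "\<zero>\<^bsub>A\<^esub>"] by simp
  qed
  show "Group.comm_monoid S"
  proof (rule comm_monoidI)
    fix x y z assume x: "x \<in> carrier S" and y: "y \<in> carrier S" and z: "z \<in> carrier S"
    note closed = amalg_mem_closed[OF x] amalg_mem_closed[OF y] amalg_mem_closed[OF z]
    show "x \<otimes>\<^bsub>S\<^esub> y \<in> carrier S" using x y by (rule amalg_mult_closed)
    show "x \<otimes>\<^bsub>S\<^esub> y \<otimes>\<^bsub>S\<^esub> z = x \<otimes>\<^bsub>S\<^esub> (y \<otimes>\<^bsub>S\<^esub> z)" using closed by (simp add: A.m_assoc B.m_assoc)
    show "x \<otimes>\<^bsub>S\<^esub> y = y \<otimes>\<^bsub>S\<^esub> x" using closed by (simp add: A.m_comm B.m_comm)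
    show "\<one>\<^bsub>S\<^esub> \<otimes>\<^bsub>S\<^esub> x = x" using closed by simp
  next
    show "\<one>\<^bsub>S\<^esub> \<in> carrier S" using amalg_diag_mem[of "\<one>\<^bsub>A\<^esub>"] by simp
  qed
  fix x y z assume "x \<in> carrier S" "y \<in> carrier S" "z \<in> carrier S"
  then show "(x \<oplus>\<^bsub>S\<^esub> y) \<otimes>\<^bsub>S\<^esub> z = x \<otimes>\<^bsub>S\<^esub> z \<oplus>\<^bsub>S\<^esub> y \<otimes>\<^bsub>S\<^esub> z"
    using amalg_mem_closed by (simp add: A.l_distr B.l_distr)
qed

sublocale S: cring S by (rule cring_amalg)

definition amalg_incl :: "'a \<Rightarrow> 'a \<times> 'b" where "amalg_incl a = (a, f a)"

lemma amalg_incl_hom: "amalg_incl \<in> ring_hom A S"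
  by (rule ring_hom_memI) (auto simp: amalg_incl_def amalg_diag_mem)

lemma fst_amalg_hom: "fst \<in> ring_hom S A"
  by (rule ring_hom_memI) (auto dest: amalg_mem_closed)

lemma coherent_ring_of_coherent_amalg: "coherent_ring S \<Longrightarrow> coherent_ring A"
  by (rule coherent_ring_retract[OF A cring_amalg amalg_incl_hom fst_amalg_hom])
    (simp add: amalg_incl_def)

abbreviation "bmod \<equiv> ideal_module_via A B f b"
abbreviation "SA \<equiv> restrict_scalars amalg_incl (ring_module S)"

lemma bmod_simps [simp]:
  "carrier bmod = b" "x \<oplus>\<^bsub>bmod\<^esub> y = x \<oplus>\<^bsub>B\<^esub> y" "\<zero>\<^bsub>bmod\<^esub> = \<zero>\<^bsub>B\<^esub>" "a \<odot>\<^bsub>bmod\<^esub> x = f a \<otimes>\<^bsub>B\<^esub> x"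
  by (simp_all add: ideal_module_via_def)

lemma plain_module_bmod: "plain_module A bmod"
proof -
  have "bmod = restrict_scalars f ((ring_module B)\<lparr>carrier := b\<rparr>)"
    by (simp add: ideal_module_via_def restrict_scalars_def ring_module_def)
  then show ?thesis
    using plain_module_restrict_scalars[OF plain_module_restrict[OF plain_module_ring_module[OF B]
          ideal_submodule[OF B b]] A f] by simp
qed

lemma plain_module_SA: "plain_module A SA"
  by (rule plain_module_restrict_scalars[OF plain_module_ring_module[OF cring_amalg] A amalg_incl_hom])

lemma linear_map_zero_fst_embedding: "linear_map A bmod SA (\<lambda>y. (\<zero>\<^bsub>A\<^esub>, y))"
  unfolding linear_map_def using amalg_zero_fst_mem by (auto simp: amalg_incl_def)

lemma fin_gen_amalg_over_base:
  assumes "fin_gen A bmod b"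
  shows "fin_gen A SA (carrier S)"
proof -
  interpret SA: plain_module A SA by (rule plain_module_SA)
  have one: "(\<lambda>_. \<one>\<^bsub>S\<^esub>) \<in> {..<1} \<rightarrow> carrier SA" using S.one_closed by simp
  have image: "fin_gen A SA ((\<lambda>y. (\<zero>\<^bsub>A\<^esub>, y)) ` b)"
    using fin_gen_image[OF plain_module_bmod plain_module_SA linear_map_zero_fst_embedding assms] by simp
  show ?thesis
  proof (rule SA.fin_gen_add[OF SA.fin_gen_span_gens[OF one] _ image])
    show "span_gens A SA 1 (\<lambda>_. \<one>\<^bsub>S\<^esub>) \<subseteq> carrier S" using SA.span_gens_subset_carrier[OF one] by simp
    show "(\<lambda>y. (\<zero>\<^bsub>A\<^esub>, y)) ` b \<subseteq> carrier S" using amalg_zero_fst_mem by auto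
    show "submodule (carrier S) A SA" using SA.carrier_is_submodule by simp
  next
    fix x assume "x \<in> carrier S"
    then obtain a y where x: "x = (a, f a \<oplus>\<^bsub>B\<^esub> y)" "a \<in> carrier A" "y \<in> b" by (rule amalg_memE)
    have "lin_comb SA 1 (\<lambda>_. a) (\<lambda>_. \<one>\<^bsub>S\<^esub>) = (a, f a)"
    proof -
      have "(\<lambda>_. a) \<in> {..<Suc 0} \<rightarrow> carrier A" "(\<lambda>_. \<one>\<^bsub>S\<^esub>) \<in> {..<Suc 0} \<rightarrow> carrier SA"
        using x(2) S.one_closed by simp_all
      from SA.lin_comb_Suc[OF this] show ?thesis using x(2) by (simp add: amalg_incl_def)
    qed
    then have "(a, f a) \<in> span_gens A SA 1 (\<lambda>_. \<one>\<^bsub>S\<^esub>)"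
      unfolding span_gens_def using x(2) by (intro CollectI exI[of _ "\<lambda>_. a"]) auto
    moreover have "x = (a, f a) \<oplus>\<^bsub>SA\<^esub> (\<zero>\<^bsub>A\<^esub>, y)" using x ideal_mem_carrier by simp
    ultimately show "\<exists>u\<in>span_gens A SA 1 (\<lambda>_. \<one>\<^bsub>S\<^esub>). \<exists>v\<in>(\<lambda>y. (\<zero>\<^bsub>A\<^esub>, y)) ` b. x = u \<oplus>\<^bsub>SA\<^esub> v"
      using x(3) by blast
  qed
qed

lemma amalg_fst_zero:
  assumes "x \<in> carrier S" "fst x = \<zero>\<^bsub>A\<^esub>"
  shows "snd x \<in> b" "x = (\<zero>\<^bsub>A\<^esub>, snd x)"
proof -
  obtain a y where "x = (a, f a \<oplus>\<^bsub>B\<^esub> y)" "y \<in> b" using assms(1) by (rule amalg_memE)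
  with assms(2) show "snd x \<in> b" "x = (\<zero>\<^bsub>A\<^esub>, snd x)" using ideal_mem_carrier by auto
qed

lemma fin_pres_fst_kernel:
  assumes K: "submodule K A SA" and K_fst: "\<And>x. x \<in> K \<Longrightarrow> fst x = \<zero>\<^bsub>A\<^esub>"
    and fin_gen_K: "fin_gen A SA K" and coherent_b: "coherent_module A bmod"
  shows "fin_pres A (SA\<lparr>carrier := K\<rparr>)"
proof -
  interpret SA: plain_module A SA by (rule plain_module_SA)
  interpret BM: plain_module A bmod by (rule plain_module_bmod)
  have K_sub: "K \<subseteq> carrier S" using SA.submoduleE(1)[OF K] by simp
  have K_b: "snd x \<in> b" and K_pair: "x = (\<zero>\<^bsub>A\<^esub>, snd x)" if "x \<in> K" for x
    using amalg_fst_zero[OF _ K_fst[OF that]] that K_sub by auto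
  have MK: "plain_module A (SA\<lparr>carrier := K\<rparr>)" by (rule plain_module_restrict[OF plain_module_SA K])
  have snd: "linear_map A (SA\<lparr>carrier := K\<rparr>) bmod snd"
    unfolding linear_map_def using K_b by (auto simp: amalg_incl_def)
  have fin_gen_Y: "fin_gen A bmod (snd ` K)"
    using fin_gen_image[OF MK plain_module_bmod snd] fin_gen_restrict[OF plain_module_SA K] fin_gen_K by simp
  have Y_b: "snd ` K \<subseteq> b" using K_b by auto
  have Y: "submodule (snd ` K) A bmod" using BM.fin_gen_submodule[OF fin_gen_Y] Y_b by simp
  have "fin_pres A (bmod\<lparr>carrier := snd ` K\<rparr>)"
    using coherent_b fin_gen_Y Y_b unfolding coherent_module_def by simp
  moreover have "linear_map A (bmod\<lparr>carrier := snd ` K\<rparr>) (SA\<lparr>carrier := K\<rparr>) (\<lambda>y. (\<zero>\<^bsub>A\<^esub>, y))"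
    unfolding linear_map_def using K_pair Y_b ideal_mem_carrier by (auto simp: amalg_incl_def image_iff)
  moreover have "bij_betw (\<lambda>y. (\<zero>\<^bsub>A\<^esub>, y)) (snd ` K) K"
    unfolding bij_betw_def inj_on_def using K_pair by (auto simp: image_iff)
  ultimately show ?thesis
    using fin_pres_bij[OF plain_module_restrict[OF plain_module_bmod Y] MK] by simp
qed

(* J is an extension of the ideal fst ` J of A by the kernel of fst. *)
lemma fin_pres_ideal_over_base:
  assumes J: "submodule J S (ring_module S)" and fin_gen_J: "fin_gen A SA J"
    and coherent_A: "coherent_ring A" and coherent_b: "coherent_module A bmod"
  shows "fin_pres A (SA\<lparr>carrier := J\<rparr>)"
proof -
  interpret SA: plain_module A SA by (rule plain_module_SA)
  have J_A: "submodule J A SA"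
    by (rule submodule_restrict_scalars[OF plain_module_ring_module[OF cring_amalg] A amalg_incl_hom J])
  have J_sub: "J \<subseteq> carrier S" using SA.submoduleE(1)[OF J_A] by simp
  define MJ where "MJ = SA\<lparr>carrier := J\<rparr>"
  have MJ: "plain_module A MJ" unfolding MJ_def by (rule plain_module_restrict[OF plain_module_SA J_A])
  let ?I = "fst ` J"
  have fst_lin: "linear_map A MJ (ring_module A) fst"
    unfolding linear_map_def MJ_def using J_sub amalg_mem_closed by (auto simp: amalg_incl_def)
  have fin_gen_MJ: "fin_gen A MJ J"
    unfolding MJ_def using fin_gen_restrict[OF plain_module_SA J_A] fin_gen_J by simp
  have fin_gen_I: "fin_gen A (ring_module A) ?I"
    using fin_gen_image[OF MJ plain_module_ring_module[OF A] fst_lin fin_gen_MJ] MJ_def by simp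
  have I_sub: "?I \<subseteq> carrier A" using J_sub amalg_mem_closed by auto
  have I: "submodule ?I A (ring_module A)"
    using plain_module.fin_gen_submodule[OF plain_module_ring_module[OF A] fin_gen_I] I_sub by simp
  have fin_pres_I: "fin_pres A ((ring_module A)\<lparr>carrier := ?I\<rparr>)"
    using coherent_A fin_gen_I I_sub unfolding coherent_ring_def coherent_module_def by simp
  have QI: "plain_module A ((ring_module A)\<lparr>carrier := ?I\<rparr>)"
    by (rule plain_module_restrict[OF plain_module_ring_module[OF A] I])
  have fst_lin': "linear_map A MJ ((ring_module A)\<lparr>carrier := ?I\<rparr>) fst"
    using fst_lin unfolding linear_map_def MJ_def by auto
  let ?K = "{x \<in> J. fst x = \<zero>\<^bsub>A\<^esub>}"
  have K_MJ: "submodule ?K A MJ"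
    using linear_map_kernel_submodule[OF MJ QI fst_lin'] by (simp add: MJ_def)
  have K_SA: "submodule ?K A SA"
    using submodule_of_restrict[OF plain_module_SA J_A] K_MJ by (simp add: MJ_def)
  have fin_gen_K: "fin_gen A SA ?K"
  proof -
    have "fin_gen A MJ {x \<in> carrier MJ. fst x = \<zero>\<^bsub>(ring_module A)\<lparr>carrier := ?I\<rparr>\<^esub>}"
      using fin_gen_MJ fin_pres_I
      by (intro fin_gen_kernel[OF MJ QI fst_lin']) (auto simp: MJ_def)
    then show ?thesis
      using fin_gen_restrict[OF plain_module_SA J_A] MJ_def by auto
  qed
  have "fin_pres A (MJ\<lparr>carrier := ?K\<rparr>)"
    using fin_pres_fst_kernel[OF K_SA _ fin_gen_K coherent_b] by (simp add: MJ_def)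
  then have "fin_pres A MJ"
    by (intro fin_pres_extension[OF MJ QI K_MJ _ fst_lin' _ _ fin_pres_I]) (auto simp: MJ_def)
  then show ?thesis unfolding MJ_def .
qed

lemma coherent_ring_amalg:
  assumes coherent_A: "coherent_ring A" and coherent_b: "coherent_module A bmod"
  shows "coherent_ring S"
  unfolding coherent_ring_def coherent_module_def
proof (intro conjI allI impI)
  interpret MS: plain_module S "ring_module S" by (rule plain_module_ring_module[OF cring_amalg])
  show "fin_gen S (ring_module S) (carrier (ring_module S))"
    using fin_gen_ring_module[OF cring_amalg] by simp
  fix J assume "J \<subseteq> carrier (ring_module S) \<and> fin_gen S (ring_module S) J"
  then have J_sub: "J \<subseteq> carrier (ring_module S)" and fin_gen_J: "fin_gen S (ring_module S) J" by auto
  have J: "submodule J S (ring_module S)" by (rule MS.fin_gen_submodule[OF fin_gen_J J_sub])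
  define MJ where "MJ = (ring_module S)\<lparr>carrier := J\<rparr>"
  have MJ: "plain_module S MJ" unfolding MJ_def by (rule plain_module_restrict[OF MS.plain_module_axioms J])
  have fin_gen_MJ: "fin_gen S MJ (carrier MJ)"
    unfolding MJ_def using fin_gen_restrict[OF MS.plain_module_axioms J] fin_gen_J by simp
  have fin_gen_SA: "fin_gen A SA (carrier S)"
    using fin_gen_amalg_over_base coherent_b unfolding coherent_module_def by simp
  have "fin_gen A (restrict_scalars amalg_incl MJ) (carrier MJ)"
    by (rule fin_gen_restrict_scalars[OF MJ A amalg_incl_hom fin_gen_MJ fin_gen_SA])
  then have "fin_gen A SA J"
    using fin_gen_restrict[OF plain_module_SA
        submodule_restrict_scalars[OF MS.plain_module_axioms A amalg_incl_hom J]]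
    by (simp add: MJ_def restrict_scalars_update_carrier)
  then have "fin_pres A (restrict_scalars amalg_incl MJ)"
    using fin_pres_ideal_over_base[OF J _ coherent_A coherent_b]
    by (simp add: MJ_def restrict_scalars_update_carrier)
  then show "fin_pres S ((ring_module S)\<lparr>carrier := J\<rparr>)"
    using fin_pres_descent[OF MJ A amalg_incl_hom fin_gen_MJ fin_gen_SA] unfolding MJ_def by simp
qed

end

theorem proposition4p14:
  fixes A :: "('a, 'n) ring_scheme" and B :: "('b, 'm) ring_scheme"
    and f :: "'a \<Rightarrow> 'b" and b :: "'b set"
  assumes "cring A" and "cring B" and "f \<in> ring_hom A B" and "ideal b B"
  shows "(coherent_ring (amalg A B f b) \<longrightarrow> coherent_ring A)
       \<and> (coherent_ring A \<and> coherent_module A (ideal_module_via A B f b)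
            \<longrightarrow> coherent_ring (amalg A B f b))"
proof -
  interpret amalgamation A B f b by (rule amalgamation.intro) (rule assms)+
  show ?thesis using coherent_ring_of_coherent_amalg coherent_ring_amalg by blast
qed

end
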